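(* For any digraph $G$, \[1+\mathrm{cr}(G)=\mathrm{lifo}_{\mathtt{mi}}(G)=\mathrm{lifo}_{\mathtt{i}}(G)=\mathrm{lifo}_{\mathtt{misc}}(G)=\mathrm{lifo}_{\mathtt{isc}}(G)=\mathrm{lifo}_{\mathtt{mv}}(G)=\mathrm{lifo}_{\mathtt{v}}(G)=\mathrm{lifo}_{\mathtt{mvsc}}(G)=\mathrm{lifo}_{\mathtt{vsc}}(G)=\mathrm{sstat}_{\mathtt{vsc}}(G).\]
   Context: All digraphs are finite, simple, without self-loops and have at least one vertex (induced subgraphs appearing as game data may be empty). For a finite set $V$, $V^*$ is the set of finite words over $V$, $\epsilon$ the empty word; $X \preceq Y$ means $X$ is a prefix of $Y$; for $X=a_1\cdots a_n$, $|X|=n$ and $\mathrm{let}(X)=\{a_1,\dots,a_n\}$. $A\Delta B$ is symmetric difference. For $X\subseteq V(G)$, $G\setminus X$ is the subgraph induced by $V(G)\setminus X$. Induced subgraphs are identified with their vertex sets. An initial component of a digraph $H$ is a strongly connected component $C$ with no edge from $H\setminus C$ into $C$. A subgraph $H\subseteq G$ is successor-closed if there is no edge of $G$ from $H$ to $G\setminus H$. Cycle-rank $\mathrm{cr}(G)$: $0$ if $G$ is acyclic; $1+\min_{v\in V(G)}\mathrm{cr}(G\setminus\{v\})$ if $G$ is strongly connected (and not acyclic); otherwise the maximum of $\mathrm{cr}(H)$ over strongly connected components $H$ of $G$. LIFO-search game. A position is a pair $(X,R)$ with $X\in V(G)^*$ and $R$ a (possibly empty) induced subgraph of $G\setminus\mathrm{let}(X)$.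 It is an $\mathtt{i}$-position if $R$ is successor-closed; an $\mathtt{isc}$-position if $R$ is a union of strongly connected components of $G\setminus\mathrm{let}(X)$; a $\mathtt{v}$-position if $R$ is successor-closed and has a unique initial component; a $\mathtt{vsc}$-position if $R$ is a strongly connected component of $G\setminus\mathrm{let}(X)$. For $\mathbf{gv}\in\{\mathtt{i},\mathtt{isc},\mathtt{v},\mathtt{vsc}\}$, a $\mathbf{gv}$-position $(X',R')$ is a $\mathbf{gv}$-successor of $(X,R)$ if ($X\preceq X'$ or $X'\preceq X$), $|\mathrm{let}(X)\Delta\mathrm{let}(X')|=1$, and: for $\mathbf{gv}\in\{\mathtt{i},\mathtt{v}\}$, every $v'\in R'$ is reachable by a directed path in $G\setminus(\mathrm{let}(X)\cap\mathrm{let}(X'))$ from some $v\in R$; for $\mathbf{gv}\in\{\mathtt{isc},\mathtt{vsc}\}$, every $v'\in R'$ lies in the same strongly connected component of $G\setminus(\mathrm{let}(X)\cap\mathrm{let}(X'))$ as some $v\in R$. For $\mathbf{gv}\in\{\mathtt{v},\mathtt{vsc}\}$, if $(\epsilon,G)$ is not a $\mathbf{gv}$-position it is nevertheless admitted as a special position whose $\mathbf{gv}$-successors are exactly the $\mathbf{gv}$-positions of the form $(\epsilon,R)$. A $\mathbf{gv}$-search from $(X_0,R_0)$ is a finite or infinite sequence of $\mathbf{gv}$-positions $(X_0,R_0),(X_1,R_1),\dots$ with each $(X_{i+1},R_{i+1})$ a $\mathbf{gv}$-successor of $(X_i,R_i)$; it is complete if it is infinite or $R_n=\emptyset$ for some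 $n$, and a complete search is winning for the searchers if $R_n=\emptyset$ for some $n$. A complete search from $(\epsilon,G)$ is monotone if $R_{i+1}\subseteq R_i$ for all $i$; searcher-stationary if $X_i\preceq X_{i+1}$ for all $i$ with $R_i\neq\emptyset$; uses at most $k$ searchers if $|X_i|\le k$ for all $i$. A (searcher) $\mathbf{gv}$-strategy is a function $\sigma$ from $\mathbf{gv}$-positions to $V(G)^*$ such that $\sigma(X,R)$ is the first component of some $\mathbf{gv}$-successor of $(X,R)$; a search is consistent with $\sigma$ if $X_{i+1}=\sigma(X_i,R_i)$ for all $i$. $\sigma$ is winning if every complete consistent search from $(\epsilon,G)$ is winning for the searchers; it is monotone / searcher-stationary / uses at most $k$ searchers if every complete consistent search from $(\epsilon,G)$ has that property. $\mathrm{lifo}_{\mathbf{gv}}(G)$ (resp. $\mathrm{lifo}_{\mathtt{m}\mathbf{gv}}(G)$) is the minimum $k$ such that there is a winning (resp. monotone winning) $\mathbf{gv}$-strategy using at most $k$ searchers; $\mathrm{sstat}_{\mathtt{vsc}}(G)$ is the minimum $k$ such that there is a searcher-stationary winning $\mathtt{vsc}$-strategy using at most $k$ searchers. *)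

theory Defs
  imports Main "HOL-Library.Sublist"
begin

text \<open>A digraph is given by a finite nonempty vertex set V and an edge relation E on V
  without self-loops. Induced subgraphs are identified with their vertex sets.\<close>

definition digraph :: "'a set \<Rightarrow> ('a \<times> 'a) set \<Rightarrow> bool" where
  "digraph V E \<longleftrightarrow> finite V \<and> V \<noteq> {} \<and> E \<subseteq> V \<times> V \<and> (\<forall>v. (v, v) \<notin> E)"

definition Er :: "('a \<times> 'a) set \<Rightarrow> 'a set \<Rightarrow> ('a \<times> 'a) set" where
  "Er E S = E \<inter> (S \<times> S)"

definition reach :: "('a \<times> 'a) set \<Rightarrow> 'a set \<Rightarrow> 'a \<Rightarrow> 'a \<Rightarrow> bool" where
  "reach E S u v \<longleftrightarrow> u \<in> S \<and> v \<in> S \<and> (u, v) \<in> (Er E S)\<^sup>*"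

definition scc_of :: "('a \<times> 'a) set \<Rightarrow> 'a set \<Rightarrow> 'a \<Rightarrow> 'a set" where
  "scc_of E S v = {w. reach E S v w \<and> reach E S w v}"

definition sccs :: "('a \<times> 'a) set \<Rightarrow> 'a set \<Rightarrow> 'a set set" where
  "sccs E S = {scc_of E S v | v. v \<in> S}"

definition strongly_connected :: "('a \<times> 'a) set \<Rightarrow> 'a set \<Rightarrow> bool" where
  "strongly_connected E S \<longleftrightarrow> S \<noteq> {} \<and> (\<forall>u\<in>S. \<forall>v\<in>S. reach E S u v)"

definition acyclic_on :: "('a \<times> 'a) set \<Rightarrow> 'a set \<Rightarrow> bool" where
  "acyclic_on E S \<longleftrightarrow> acyclic (Er E S)"

definition succ_closed :: "('a \<times> 'a) set \<Rightarrow> 'a set \<Rightarrow> 'a set \<Rightarrow> bool" where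
  "succ_closed E S H \<longleftrightarrow> H \<subseteq> S \<and> (\<forall>u v. (u, v) \<in> E \<longrightarrow> u \<in> H \<longrightarrow> v \<in> S \<longrightarrow> v \<in> H)"

definition initial_comp :: "('a \<times> 'a) set \<Rightarrow> 'a set \<Rightarrow> 'a set \<Rightarrow> bool" where
  "initial_comp E H C \<longleftrightarrow> C \<in> sccs E H \<and> \<not> (\<exists>u v. (u, v) \<in> E \<and> u \<in> H - C \<and> v \<in> C)"

definition union_sccs :: "('a \<times> 'a) set \<Rightarrow> 'a set \<Rightarrow> 'a set \<Rightarrow> bool" where
  "union_sccs E S R \<longleftrightarrow> R \<subseteq> S \<and> (\<forall>v\<in>R. scc_of E S v \<subseteq> R)"

text \<open>Recursion with fuel; the fuel card S suffices since every recursive call is on a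
  strictly smaller set, so cr below agrees with the recursive definition.\<close>
primrec cr_aux :: "('a \<times> 'a) set \<Rightarrow> nat \<Rightarrow> 'a set \<Rightarrow> nat" where
  "cr_aux E 0 S = 0"
| "cr_aux E (Suc n) S =
     (if acyclic_on E S then 0
      else if strongly_connected E S then 1 + Min ((\<lambda>v. cr_aux E n (S - {v})) ` S)
      else Max ((\<lambda>C. cr_aux E n C) ` sccs E S))"

definition cr :: "('a \<times> 'a) set \<Rightarrow> 'a set \<Rightarrow> nat" where
  "cr E S = cr_aux E (card S) S"

datatype gvar = GI | GISC | GV | GVSC

type_synonym 'a position = "'a list \<times> 'a set"

definition gen_pos :: "gvar \<Rightarrow> 'a set \<Rightarrow> ('a \<times> 'a) set \<Rightarrow> 'a position \<Rightarrow> bool" where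
  "gen_pos g V E p = (case p of (X, R) \<Rightarrow>
     set X \<subseteq> V \<and> R \<subseteq> V - set X \<and>
     (case g of
        GI \<Rightarrow> succ_closed E (V - set X) R
      | GISC \<Rightarrow> union_sccs E (V - set X) R
      | GV \<Rightarrow> succ_closed E (V - set X) R \<and> (R = {} \<or> (\<exists>!C. initial_comp E R C))
      | GVSC \<Rightarrow> R = {} \<or> R \<in> sccs E (V - set X)))"

definition special_pos :: "gvar \<Rightarrow> 'a set \<Rightarrow> ('a \<times> 'a) set \<Rightarrow> 'a position \<Rightarrow> bool" where
  "special_pos g V E p \<longleftrightarrow> g \<in> {GV, GVSC} \<and> p = ([], V) \<and> \<not> gen_pos g V E ([], V)"

definition is_pos :: "gvar \<Rightarrow> 'a set \<Rightarrow> ('a \<times> 'a) set \<Rightarrow> 'a position \<Rightarrow> bool" where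
  "is_pos g V E p \<longleftrightarrow> gen_pos g V E p \<or> special_pos g V E p"

definition is_succ :: "gvar \<Rightarrow> 'a set \<Rightarrow> ('a \<times> 'a) set \<Rightarrow> 'a position \<Rightarrow> 'a position \<Rightarrow> bool" where
  "is_succ g V E p q =
    (if special_pos g V E p then gen_pos g V E q \<and> fst q = []
     else gen_pos g V E p \<and> gen_pos g V E q \<and>
       (case p of (X, R) \<Rightarrow> case q of (X', R') \<Rightarrow>
          (prefix X X' \<or> prefix X' X) \<and>
          card ((set X - set X') \<union> (set X' - set X)) = 1 \<and>
          (let W = V - (set X \<inter> set X') in
           if g \<in> {GI, GV} then (\<forall>v'\<in>R'. \<exists>v\<in>R. reach E W v v')
           else (\<forall>v'\<in>R'. \<exists>v\<in>R. v' \<in> scc_of E W v))))"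

definition is_strategy :: "gvar \<Rightarrow> 'a set \<Rightarrow> ('a \<times> 'a) set \<Rightarrow> ('a position \<Rightarrow> 'a list) \<Rightarrow> bool" where
  "is_strategy g V E \<sigma> \<longleftrightarrow> (\<forall>p. is_pos g V E p \<longrightarrow> (\<exists>R'. is_succ g V E p (\<sigma> p, R')))"

text \<open>A search is a finite or infinite sequence f of positions: len = None means infinite
  (indices all naturals), len = Some n means positions f 0, ..., f n.\<close>
definition idx :: "nat option \<Rightarrow> nat set" where
  "idx len = (case len of None \<Rightarrow> UNIV | Some n \<Rightarrow> {..n})"

definition complete_consistent_search ::
  "gvar \<Rightarrow> 'a set \<Rightarrow> ('a \<times> 'a) set \<Rightarrow> ('a position \<Rightarrow> 'a list) \<Rightarrow> (nat \<Rightarrow> 'a position) \<Rightarrow> nat option \<Rightarrow> bool" where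
  "complete_consistent_search g V E \<sigma> f len \<longleftrightarrow>
     f 0 = ([], V) \<and>
     (\<forall>i\<in>idx len. is_pos g V E (f i)) \<and>
     (\<forall>i. Suc i \<in> idx len \<longrightarrow> is_succ g V E (f i) (f (Suc i)) \<and> fst (f (Suc i)) = \<sigma> (f i)) \<and>
     (len = None \<or> (\<exists>i\<in>idx len. snd (f i) = {}))"

definition winning_strat :: "gvar \<Rightarrow> 'a set \<Rightarrow> ('a \<times> 'a) set \<Rightarrow> ('a position \<Rightarrow> 'a list) \<Rightarrow> bool" where
  "winning_strat g V E \<sigma> \<longleftrightarrow> (\<forall>f len. complete_consistent_search g V E \<sigma> f len \<longrightarrow>
      (\<exists>i\<in>idx len. snd (f i) = {}))"

definition monotone_strat :: "gvar \<Rightarrow> 'a set \<Rightarrow> ('a \<times> 'a) set \<Rightarrow> ('a position \<Rightarrow> 'a list) \<Rightarrow> bool" where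
  "monotone_strat g V E \<sigma> \<longleftrightarrow> (\<forall>f len. complete_consistent_search g V E \<sigma> f len \<longrightarrow>
      (\<forall>i. Suc i \<in> idx len \<longrightarrow> snd (f (Suc i)) \<subseteq> snd (f i)))"

definition stationary_strat :: "gvar \<Rightarrow> 'a set \<Rightarrow> ('a \<times> 'a) set \<Rightarrow> ('a position \<Rightarrow> 'a list) \<Rightarrow> bool" where
  "stationary_strat g V E \<sigma> \<longleftrightarrow> (\<forall>f len. complete_consistent_search g V E \<sigma> f len \<longrightarrow>
      (\<forall>i. Suc i \<in> idx len \<longrightarrow> snd (f i) \<noteq> {} \<longrightarrow> prefix (fst (f i)) (fst (f (Suc i)))))"

definition uses_at_most :: "gvar \<Rightarrow> 'a set \<Rightarrow> ('a \<times> 'a) set \<Rightarrow> ('a position \<Rightarrow> 'a list) \<Rightarrow> nat \<Rightarrow> bool" where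
  "uses_at_most g V E \<sigma> k \<longleftrightarrow> (\<forall>f len. complete_consistent_search g V E \<sigma> f len \<longrightarrow>
      (\<forall>i\<in>idx len. length (fst (f i)) \<le> k))"

definition lifo :: "gvar \<Rightarrow> 'a set \<Rightarrow> ('a \<times> 'a) set \<Rightarrow> nat" where
  "lifo g V E = (LEAST k. \<exists>\<sigma>. is_strategy g V E \<sigma> \<and> winning_strat g V E \<sigma> \<and> uses_at_most g V E \<sigma> k)"

definition lifo_m :: "gvar \<Rightarrow> 'a set \<Rightarrow> ('a \<times> 'a) set \<Rightarrow> nat" where
  "lifo_m g V E = (LEAST k. \<exists>\<sigma>. is_strategy g V E \<sigma> \<and> winning_strat g V E \<sigma> \<and>
      monotone_strat g V E \<sigma> \<and> uses_at_most g V E \<sigma> k)"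

definition sstat_vsc :: "'a set \<Rightarrow> ('a \<times> 'a) set \<Rightarrow> nat" where
  "sstat_vsc V E = (LEAST k. \<exists>\<sigma>. is_strategy GVSC V E \<sigma> \<and> winning_strat GVSC V E \<sigma> \<and>
      stationary_strat GVSC V E \<sigma> \<and> uses_at_most GVSC V E \<sigma> k)"

end

theory Submission
  imports Defs
begin

text \<open>
  Upper bound: the searchers follow the recursion defining the cycle rank. They place a searcher
  on a vertex of optimal cycle rank in an initial component of the robber territory inside the
  zone of the last searcher, and lift that searcher once the robber has left its zone. Every
  searcher on the stack lowers the cycle rank of its zone by one, so at most \<open>1 + cr G\<close>
  searchers are used; the territory never grows and \<open>2|R| + |X|\<close> decreases, so the strategy
  is monotone, winning, and searcher-stationary in the vsc-game.

  Lower bound: the robber keeps to a strongly connected hideout of maximal cycle rank, which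
  loses at most one unit of cycle rank per searcher placed and is restored when searchers are
  lifted. Hence no strategy using at most \<open>cr G\<close> searchers catches him, in any variant.
\<close>

section \<open>Reachability and strongly connected components\<close>

lemma Er_mono: "S \<subseteq> T \<Longrightarrow> Er E S \<subseteq> Er E T"
  unfolding Er_def by auto

lemma rtrancl_Er_mono: "(a, b) \<in> (Er E S)\<^sup>* \<Longrightarrow> S \<subseteq> T \<Longrightarrow> (a, b) \<in> (Er E T)\<^sup>*"
  using rtrancl_mono[OF Er_mono] by blast

lemma reach_mono: "reach E S a b \<Longrightarrow> S \<subseteq> T \<Longrightarrow> reach E T a b"
  unfolding reach_def using rtrancl_Er_mono[of a b E S T] by blast

lemma reach_refl: "a \<in> S \<Longrightarrow> reach E S a a"
  unfolding reach_def by auto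

lemma reach_trans: "reach E S a b \<Longrightarrow> reach E S b c \<Longrightarrow> reach E S a c"
  unfolding reach_def by auto

lemma reach_edge: "(a, b) \<in> E \<Longrightarrow> a \<in> S \<Longrightarrow> b \<in> S \<Longrightarrow> reach E S a b"
  unfolding reach_def Er_def by auto

lemma reachD: "reach E S a b \<Longrightarrow> a \<in> S \<and> b \<in> S"
  unfolding reach_def by auto

lemma scc_of_subset: "scc_of E S v \<subseteq> S"
  unfolding scc_of_def reach_def by auto

lemma scc_of_refl: "v \<in> S \<Longrightarrow> v \<in> scc_of E S v"
  unfolding scc_of_def by (auto intro: reach_refl)

lemma scc_of_eq: "w \<in> scc_of E S v \<Longrightarrow> scc_of E S w = scc_of E S v"
  unfolding scc_of_def using reach_trans[of E S] by blast

lemma scc_of_sym: "w \<in> scc_of E S v \<Longrightarrow> v \<in> scc_of E S w"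
  unfolding scc_of_def by auto

lemma scc_of_mono: "S \<subseteq> T \<Longrightarrow> scc_of E S v \<subseteq> scc_of E T v"
  unfolding scc_of_def by (auto intro: reach_mono)

lemma rtrancl_Er_scc_of:
  assumes "(a, b) \<in> (Er E S)\<^sup>*" "(b, a) \<in> (Er E S)\<^sup>*" "a \<in> S"
  shows "(a, b) \<in> (Er E (scc_of E S a))\<^sup>*"
  using assms(1,2)
proof (induction rule: rtrancl_induct)
  case base
  then show ?case by simp
next
  case (step y z)
  have yz: "(y, z) \<in> Er E S" and zS: "z \<in> S" and yS: "y \<in> S"
    using step.hyps(2) unfolding Er_def by auto
  have ya: "(y, a) \<in> (Er E S)\<^sup>*"
    using yz step.prems by (meson converse_rtrancl_into_rtrancl)
  have "y \<in> scc_of E S a" "z \<in> scc_of E S a"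
    using step.hyps(1) ya yz step.prems yS zS assms(3)
    unfolding scc_of_def reach_def by (auto intro: rtrancl_into_rtrancl)
  then have "(y, z) \<in> Er E (scc_of E S a)"
    using yz unfolding Er_def by auto
  then show ?case
    using step.IH[OF ya] by (meson rtrancl_into_rtrancl)
qed

lemma reach_scc_of:
  assumes "a \<in> scc_of E S v" "b \<in> scc_of E S v"
  shows "reach E (scc_of E S v) a b"
proof -
  have e: "scc_of E S a = scc_of E S v"
    using scc_of_eq[OF assms(1)] .
  then have "(a, b) \<in> (Er E S)\<^sup>*" "(b, a) \<in> (Er E S)\<^sup>*" "a \<in> S"
    using assms unfolding scc_of_def reach_def by auto
  then have "(a, b) \<in> (Er E (scc_of E S a))\<^sup>*"
    by (rule rtrancl_Er_scc_of)
  then show ?thesis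
    using e assms unfolding reach_def by simp
qed

lemma strongly_connected_scc_of: "v \<in> S \<Longrightarrow> strongly_connected E (scc_of E S v)"
  unfolding strongly_connected_def using reach_scc_of[of _ E S v] scc_of_refl[of v S E] by blast

lemma scc_of_in_sccs: "v \<in> S \<Longrightarrow> scc_of E S v \<in> sccs E S"
  unfolding sccs_def by blast

lemma sccsD: "D \<in> sccs E S \<Longrightarrow> strongly_connected E D \<and> D \<subseteq> S"
  unfolding sccs_def using strongly_connected_scc_of scc_of_subset by fastforce

lemma scc_of_eq_sccs: "D \<in> sccs E S \<Longrightarrow> d \<in> D \<Longrightarrow> scc_of E S d = D"
  unfolding sccs_def using scc_of_eq by fastforce

lemma strongly_connected_subset_scc_of:
  assumes "strongly_connected E C" "C \<subseteq> S" "c \<in> C"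
  shows "C \<subseteq> scc_of E S c"
  using assms unfolding strongly_connected_def scc_of_def by (auto intro: reach_mono)

lemma scc_of_strongly_connected:
  "strongly_connected E C \<Longrightarrow> c \<in> C \<Longrightarrow> scc_of E C c = C"
  using strongly_connected_subset_scc_of[of E C C c] scc_of_subset[of E C c] by blast

lemma sccs_nonempty: "S \<noteq> {} \<Longrightarrow> sccs E S \<noteq> {}"
  using scc_of_in_sccs by (metis all_not_in_conv)

lemma finite_sccs:
  assumes "finite S" shows "finite (sccs E S)"
proof -
  have "sccs E S \<subseteq> Pow S" using sccsD[of _ E S] by blast
  then show ?thesis using assms finite_subset by blast
qed

lemma card_sccs_less:
  assumes "C \<in> sccs E S" "\<not> strongly_connected E S" "finite S"
  shows "card C < card S"
proof -
  have "C \<subseteq> S" "C \<noteq> S" using sccsD[OF assms(1)] assms(2) by auto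
  then show ?thesis using assms(3) by (meson psubsetI psubset_card_mono)
qed

lemma rtrancl_Er_closed:
  assumes "(a, b) \<in> (Er E W)\<^sup>*" "a \<in> R" "\<And>u w. (u, w) \<in> E \<Longrightarrow> u \<in> R \<Longrightarrow> w \<in> W \<Longrightarrow> w \<in> R"
  shows "b \<in> R \<and> (a, b) \<in> (Er E R)\<^sup>*"
  using assms(1)
proof (induction rule: rtrancl_induct)
  case base
  then show ?case using assms(2) by simp
next
  case (step y z)
  then have "z \<in> R" "(y, z) \<in> Er E R"
    using assms(3) unfolding Er_def by auto
  then show ?case using step by (meson rtrancl_into_rtrancl)
qed

lemma rtrancl_enters:
  assumes "(a, b) \<in> r\<^sup>*" "a \<notin> C" "b \<in> C"
  shows "\<exists>u w. (u, w) \<in> r \<and> u \<notin> C \<and> w \<in> C"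
  using assms by (induction rule: rtrancl_induct) (simp, metis)

lemma acyclic_on_empty: "acyclic_on E {}"
  unfolding acyclic_on_def acyclic_def Er_def by simp

lemma acyclic_on_subset: "acyclic_on E S \<Longrightarrow> T \<subseteq> S \<Longrightarrow> acyclic_on E T"
  unfolding acyclic_on_def using acyclic_subset[OF _ Er_mono] by blast

lemma strongly_connected_not_acyclic_on:
  assumes "strongly_connected E S" "u \<in> S" "v \<in> S" "u \<noteq> v"
  shows "\<not> acyclic_on E S"
proof -
  have "(u, v) \<in> (Er E S)\<^sup>+" "(v, u) \<in> (Er E S)\<^sup>+"
    using assms unfolding strongly_connected_def reach_def by (auto simp: rtrancl_eq_or_trancl)
  then have "(u, u) \<in> (Er E S)\<^sup>+" by (rule trancl_trans)
  then show ?thesis unfolding acyclic_on_def acyclic_def by blast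
qed

lemma acyclic_on_card_le_1:
  assumes "\<forall>v. (v, v) \<notin> E" "finite S" "card S \<le> 1"
  shows "acyclic_on E S"
proof -
  have "Er E S = {}"
  proof (rule ccontr)
    assume "Er E S \<noteq> {}"
    then obtain a b where "(a, b) \<in> E" "a \<in> S" "b \<in> S" unfolding Er_def by auto
    moreover from this have "a \<noteq> b" using assms(1) by auto
    ultimately have "card {a, b} \<le> card S" "card {a, b} = 2"
      using card_mono[OF assms(2), of "{a, b}"] by auto
    then show False using assms(3) by simp
  qed
  then show ?thesis unfolding acyclic_on_def acyclic_def by simp
qed

text \<open>Take a vertex with the fewest ancestors inside U.\<close>

lemma initial_scc_exists:
  assumes "finite U" "U \<noteq> {}" "U \<subseteq> W" "\<forall>w\<in>U. scc_of E W w \<subseteq> U"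
  shows "\<exists>C \<in> sccs E W. C \<subseteq> U \<and> (\<forall>u w. (u, w) \<in> E \<longrightarrow> u \<in> U - C \<longrightarrow> w \<notin> C)"
proof -
  define anc where "anc w = {u \<in> U. reach E W u w}" for w
  have fin: "finite ((\<lambda>w. card (anc w)) ` U)" using assms(1) by simp
  have "Min ((\<lambda>w. card (anc w)) ` U) \<in> (\<lambda>w. card (anc w)) ` U"
    using Min_in[OF fin] assms(2) by blast
  then obtain w0 where w0: "w0 \<in> U" "Min ((\<lambda>w. card (anc w)) ` U) = card (anc w0)"
    by blast
  define C where "C = scc_of E W w0"
  have w0W: "w0 \<in> W" using w0(1) assms(3) by blast
  have "\<not> ((u, x) \<in> E \<and> u \<in> U - C \<and> x \<in> C)" for u x
  proof
    assume ux: "(u, x) \<in> E \<and> u \<in> U - C \<and> x \<in> C"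
    have "x \<in> W" using ux scc_of_subset[of E W w0] unfolding C_def by blast
    moreover have "u \<in> W" using ux assms(3) by blast
    ultimately have "reach E W u x"
      using ux reach_edge by metis
    moreover have "reach E W x w0"
      using ux C_def unfolding scc_of_def by simp
    ultimately have uw0: "reach E W u w0"
      by (rule reach_trans)
    have "w0 \<notin> anc u"
      using ux uw0 C_def unfolding anc_def scc_of_def by auto
    moreover have "anc u \<subseteq> anc w0"
      unfolding anc_def using uw0 reach_trans[of E W _ u w0] by blast
    moreover have "w0 \<in> anc w0"
      unfolding anc_def using w0(1) reach_refl[OF w0W] by simp
    moreover have "finite (anc w0)"
      using assms(1) unfolding anc_def by simp
    ultimately have "card (anc u) < card (anc w0)"
      by (metis psubsetI psubset_card_mono)
    then show False
      using Min_le[OF fin, of "card (anc u)"] ux w0(2) by auto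
  qed
  moreover have "C \<subseteq> U" using assms(4) w0(1) C_def by blast
  ultimately show ?thesis
    using scc_of_in_sccs[OF w0W] C_def by blast
qed

lemma sccs_Diff_notin:
  assumes "H \<in> sccs E W" "x \<notin> H"
  shows "H \<in> sccs E (W - {x})"
proof -
  have sc: "strongly_connected E H" "H \<subseteq> W" using sccsD[OF assms(1)] by auto
  obtain h where h: "h \<in> H" using sc(1) unfolding strongly_connected_def by blast
  have "scc_of E (W - {x}) h = H"
    using scc_of_mono[of "W - {x}" W E h] scc_of_eq_sccs[OF assms(1) h]
      strongly_connected_subset_scc_of[OF sc(1) _ h, of "W - {x}"] sc(2) assms(2) by blast
  then show ?thesis
    using scc_of_in_sccs[of h "W - {x}" E] h sc(2) assms(2) by auto
qed

lemma sccs_Diff_sccs: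
  assumes "H \<in> sccs E W" "D \<in> sccs E (H - {x})"
  shows "D \<in> sccs E (W - {x})"
proof -
  have scH: "H \<subseteq> W" using sccsD[OF assms(1)] by auto
  have scD: "strongly_connected E D" "D \<subseteq> H - {x}" using sccsD[OF assms(2)] by auto
  obtain d where d: "d \<in> D" using scD(1) unfolding strongly_connected_def by blast
  have dW: "d \<in> W - {x}" and dH: "d \<in> H" using d scD(2) scH by auto
  have "scc_of E (W - {x}) d \<subseteq> H - {x}"
    using scc_of_mono[of "W - {x}" W E d] scc_of_eq_sccs[OF assms(1) dH]
      scc_of_subset[of E "W - {x}" d] by blast
  then have "scc_of E (W - {x}) d \<subseteq> scc_of E (H - {x}) d"
    using strongly_connected_subset_scc_of[OF strongly_connected_scc_of[OF dW]] scc_of_refl[OF dW]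
    by blast
  moreover have "D \<subseteq> scc_of E (W - {x}) d"
    using strongly_connected_subset_scc_of[OF scD(1) _ d, of "W - {x}"] scD(2) scH by blast
  ultimately have "scc_of E (W - {x}) d = D"
    using scc_of_eq_sccs[OF assms(2) d] by blast
  then show ?thesis using scc_of_in_sccs[OF dW, of E] by simp
qed

lemma scc_of_Diff_notin:
  assumes "v \<in> W" "l \<notin> scc_of E W v"
  shows "scc_of E (W - {l}) v = scc_of E W v"
  using scc_of_eq_sccs[OF sccs_Diff_notin[OF scc_of_in_sccs[OF assms(1)] assms(2)]]
    scc_of_refl[OF assms(1)] by blast

section \<open>Cycle rank\<close>

lemma cr_aux_fuel:
  "finite S \<Longrightarrow> card S \<le> m \<Longrightarrow> card S \<le> m' \<Longrightarrow> cr_aux E m S = cr_aux E m' S"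
proof (induction m arbitrary: m' S)
  case 0
  then have "S = {}" by simp
  then show ?case by (cases m') (simp_all add: acyclic_on_empty)
next
  case (Suc k)
  show ?case
  proof (cases m')
    case 0
    then have "S = {}" using Suc by simp
    then show ?thesis using 0 by (simp add: acyclic_on_empty)
  next
    case (Suc k')
    have vertex_removed: "\<And>v. v \<in> S \<Longrightarrow> cr_aux E k (S - {v}) = cr_aux E k' (S - {v})"
    proof -
      fix v assume "v \<in> S"
      then have "card (S - {v}) = card S - 1" using Suc.prems(1) by simp
      then show "cr_aux E k (S - {v}) = cr_aux E k' (S - {v})"
        using Suc.IH[of "S - {v}" k'] Suc.prems \<open>m' = Suc k'\<close> by simp
    qed
    have component: "\<not> strongly_connected E S \<Longrightarrow> C \<in> sccs E S \<Longrightarrow> cr_aux E k C = cr_aux E k' C" for C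
    proof -
      assume "\<not> strongly_connected E S" "C \<in> sccs E S"
      then have "card C < card S" using card_sccs_less Suc.prems(1) by blast
      moreover have "finite C" using sccsD[OF \<open>C \<in> sccs E S\<close>] Suc.prems(1) finite_subset by blast
      ultimately show ?thesis using Suc.IH[of C k'] Suc.prems \<open>m' = Suc k'\<close> by simp
    qed
    have "(\<lambda>v. cr_aux E k (S - {v})) ` S = (\<lambda>v. cr_aux E k' (S - {v})) ` S"
      using vertex_removed by (rule image_cong[OF refl])
    moreover have "\<not> strongly_connected E S \<Longrightarrow> (\<lambda>C. cr_aux E k C) ` sccs E S = (\<lambda>C. cr_aux E k' C) ` sccs E S"
      using component by (intro image_cong) auto
    ultimately show ?thesis using Suc by (simp only: cr_aux.simps) simp
  qed
qed

lemma cr_simps: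
  assumes "finite S"
  shows "cr E S = (if acyclic_on E S then 0 else if strongly_connected E S
      then 1 + Min ((\<lambda>v. cr E (S - {v})) ` S) else Max ((\<lambda>C. cr E C) ` sccs E S))"
proof (cases "S = {}")
  case True
  then show ?thesis unfolding cr_def by (simp add: acyclic_on_empty)
next
  case False
  then obtain m where m: "card S = Suc m" using assms by (metis card_0_eq not0_implies_Suc)
  have vertex_removed: "v \<in> S \<Longrightarrow> cr_aux E m (S - {v}) = cr E (S - {v})" for v
    unfolding cr_def using m assms by simp
  have component: "\<not> strongly_connected E S \<Longrightarrow> C \<in> sccs E S \<Longrightarrow> cr_aux E m C = cr E C" for C
  proof -
    assume "\<not> strongly_connected E S" "C \<in> sccs E S"
    then have "card C < card S" using card_sccs_less assms by blast
    moreover have "finite C" using sccsD[OF \<open>C \<in> sccs E S\<close>] assms finite_subset by blast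
    ultimately show ?thesis unfolding cr_def using cr_aux_fuel[of C m "card C" E] m by simp
  qed
  have "(\<lambda>v. cr_aux E m (S - {v})) ` S = (\<lambda>v. cr E (S - {v})) ` S"
    using vertex_removed by (rule image_cong[OF refl])
  moreover have "\<not> strongly_connected E S \<Longrightarrow> (\<lambda>C. cr_aux E m C) ` sccs E S = (\<lambda>C. cr E C) ` sccs E S"
    using component by (intro image_cong) auto
  ultimately show ?thesis unfolding cr_def[of E S] using m by (simp only: cr_aux.simps) simp
qed

lemma cr_acyclic: "finite S \<Longrightarrow> acyclic_on E S \<Longrightarrow> cr E S = 0"
  using cr_simps[of S E] by simp

lemma cr_strongly_connected: "finite S \<Longrightarrow> \<not> acyclic_on E S \<Longrightarrow> strongly_connected E S \<Longrightarrow>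
   cr E S = 1 + Min ((\<lambda>v. cr E (S - {v})) ` S)"
  using cr_simps[of S E] by simp

lemma cr_not_strongly_connected: "finite S \<Longrightarrow> \<not> acyclic_on E S \<Longrightarrow> \<not> strongly_connected E S \<Longrightarrow>
   cr E S = Max ((\<lambda>C. cr E C) ` sccs E S)"
  using cr_simps[of S E] by simp

lemma cr_strongly_connected_le:
  assumes "finite S" "\<not> acyclic_on E S" "strongly_connected E S" "v \<in> S"
  shows "cr E S \<le> 1 + cr E (S - {v})"
  using cr_strongly_connected[OF assms(1-3)] Min_le[of "(\<lambda>v. cr E (S - {v})) ` S"] assms(1,4) by simp

lemma cr_strongly_connected_argmin:
  assumes "finite S" "\<not> acyclic_on E S" "strongly_connected E S"
    and "v \<in> S" "\<forall>u\<in>S. cr E (S - {v}) \<le> cr E (S - {u})"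
  shows "cr E S = 1 + cr E (S - {v})"
proof -
  have "Min ((\<lambda>u. cr E (S - {u})) ` S) = cr E (S - {v})"
    using assms(1,4,5) by (intro Min_eqI) auto
  then show ?thesis using cr_strongly_connected[OF assms(1-3)] by simp
qed

lemma ex_cr_argmin:
  assumes "finite S" "S \<noteq> {}"
  shows "\<exists>v\<in>S. \<forall>u\<in>S. cr E (S - {v}) \<le> cr E (S - {u})"
proof -
  have "Min ((\<lambda>u. cr E (S - {u})) ` S) \<in> (\<lambda>u. cr E (S - {u})) ` S"
    using assms by (intro Min_in) auto
  then obtain v where "v \<in> S" "Min ((\<lambda>u. cr E (S - {u})) ` S) = cr E (S - {v})"
    by blast
  then show ?thesis using assms(1) by (metis Min_le finite_imageI image_eqI)
qed

lemma ex_scc_cr_eq: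
  assumes "finite S" "S \<noteq> {}"
  shows "\<exists>D \<in> sccs E S. cr E S = cr E D"
proof -
  obtain v where v: "v \<in> S" using assms(2) by blast
  consider "acyclic_on E S" | "\<not> acyclic_on E S" "strongly_connected E S"
    | "\<not> acyclic_on E S" "\<not> strongly_connected E S" by blast
  then show ?thesis
  proof cases
    case 1
    have sub: "scc_of E S v \<subseteq> S" by (rule scc_of_subset)
    have "cr E (scc_of E S v) = 0"
      using cr_acyclic[OF finite_subset[OF sub assms(1)] acyclic_on_subset[OF 1 sub]] .
    moreover have "cr E S = 0" using cr_acyclic[OF assms(1) 1] .
    ultimately show ?thesis using scc_of_in_sccs[OF v, of E] by (intro bexI) simp_all
  next
    case 2
    have "S \<in> sccs E S"
      using scc_of_in_sccs[OF v, of E] scc_of_strongly_connected[OF 2(2) v] by simp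
    then show ?thesis by (intro bexI) simp_all
  next
    case 3
    have "Max ((\<lambda>C. cr E C) ` sccs E S) \<in> (\<lambda>C. cr E C) ` sccs E S"
      using finite_sccs[OF assms(1)] sccs_nonempty[OF assms(2)] by (intro Max_in) simp_all
    then obtain D where "D \<in> sccs E S" "Max ((\<lambda>C. cr E C) ` sccs E S) = cr E D"
      by blast
    then show ?thesis using cr_not_strongly_connected[OF assms(1) 3] by (intro bexI) simp_all
  qed
qed

lemma cr_scc_le:
  assumes "finite S" "D \<in> sccs E S"
  shows "cr E D \<le> cr E S"
proof -
  have D: "strongly_connected E D" "D \<subseteq> S" using sccsD[OF assms(2)] by auto
  consider "acyclic_on E S" | "\<not> acyclic_on E S" "strongly_connected E S"
    | "\<not> acyclic_on E S" "\<not> strongly_connected E S" by blast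
  then show ?thesis
  proof cases
    case 1
    then show ?thesis
      using cr_acyclic[OF finite_subset[OF D(2) assms(1)] acyclic_on_subset[OF 1 D(2)]] by simp
  next
    case 2
    obtain d where d: "d \<in> D" using D(1) unfolding strongly_connected_def by blast
    have "D = S"
      using scc_of_eq_sccs[OF assms(2) d] scc_of_strongly_connected[OF 2(2)] d D(2) by blast
    then show ?thesis by simp
  next
    case 3
    then show ?thesis
      using cr_not_strongly_connected[OF assms(1) 3] finite_sccs[OF assms(1)] assms(2) by simp
  qed
qed

text \<open>Induction on the size of S. If T meets a strongly connected S, either the optimal
  vertex of S lies outside T or it can be removed from both sides.\<close>

lemma cr_mono:
  "finite S \<Longrightarrow> T \<subseteq> S \<Longrightarrow> cr E T \<le> cr E S"
proof (induction "card S" arbitrary: S T rule: less_induct)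
  case less
  have finT: "finite T" using less.prems finite_subset by blast
  show ?case
  proof (cases "T = {}")
    case True
    have "cr E {} = 0" by (rule cr_acyclic[OF finite.emptyI acyclic_on_empty])
    with True show ?thesis by simp
  next
    case False
    then obtain D where D: "D \<in> sccs E T" "cr E T = cr E D"
      using ex_scc_cr_eq[OF finT] by blast
    have scD: "strongly_connected E D" "D \<subseteq> S" using sccsD[OF D(1)] less.prems by auto
    obtain d where d: "d \<in> D" using scD(1) unfolding strongly_connected_def by blast
    define C where "C = scc_of E S d"
    have "d \<in> S" using d scD(2) by blast
    then have CS: "C \<in> sccs E S" unfolding C_def by (rule scc_of_in_sccs)
    have DC: "D \<subseteq> C" using strongly_connected_subset_scc_of[OF scD d] C_def by simp
    have finD: "finite D" using scD(2) less.prems(1) finite_subset by blast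
    have "cr E D \<le> cr E C"
    proof (cases "C = S")
      case False
      have "C \<subseteq> S" using sccsD[OF CS] by simp
      then have "card C < card S" "finite C"
        using False less.prems(1) by (auto intro: psubset_card_mono finite_subset)
      then show ?thesis using less.hyps[OF _ _ DC] by blast
    next
      case CS_eq: True
      have scS: "strongly_connected E S" using sccsD[OF CS] CS_eq by simp
      show ?thesis
      proof (cases "acyclic_on E D")
        case True
        then show ?thesis using cr_acyclic[OF finD] by simp
      next
        case cyD: False
        have cyS: "\<not> acyclic_on E S" using cyD acyclic_on_subset scD(2) by blast
        obtain w where w: "w \<in> S" "\<forall>u\<in>S. cr E (S - {w}) \<le> cr E (S - {u})"
          using ex_cr_argmin[OF less.prems(1)] scS unfolding strongly_connected_def by blast
        have crS: "cr E S = 1 + cr E (S - {w})"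
          by (rule cr_strongly_connected_argmin[OF less.prems(1) cyS scS w])
        have lt: "card (S - {w}) < card S" using card_Diff1_less[OF less.prems(1) w(1)] .
        have "cr E D \<le> 1 + cr E (S - {w})"
        proof (cases "w \<in> D")
          case False
          then have "D \<subseteq> S - {w}" using scD(2) by blast
          then have "cr E D \<le> cr E (S - {w})" using less.hyps[OF lt] less.prems(1) by blast
          then show ?thesis by simp
        next
          case True
          have "D - {w} \<subseteq> S - {w}" using scD(2) by blast
          then have "cr E (D - {w}) \<le> cr E (S - {w})"
            using less.hyps[OF lt] less.prems(1) by blast
          then show ?thesis using cr_strongly_connected_le[OF finD cyD scD(1) True] by simp
        qed
        then show ?thesis using crS CS_eq by simp
      qed
    qed
    then show ?thesis using D(2) cr_scc_le[OF less.prems(1) CS] by simp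
  qed
qed

text \<open>In a move whose searchers common to both positions leave W free, every new robber
  vertex is related to an old one by this relation: reachability in the i- and v-games, same
  component in the isc- and vsc-games.\<close>

definition robber_moves :: "gvar \<Rightarrow> ('a \<times> 'a) set \<Rightarrow> 'a set \<Rightarrow> 'a \<Rightarrow> 'a \<Rightarrow> bool" where
  "robber_moves g E W v v' \<longleftrightarrow> (if g \<in> {GI, GV} then reach E W v v' else v' \<in> scc_of E W v)"

lemma gen_pos_not_special: "gen_pos g V E p \<Longrightarrow> \<not> special_pos g V E p"
  unfolding special_pos_def by auto

lemma is_succ_gen_pos_iff:
  assumes "gen_pos g V E (X, R)"
  shows "is_succ g V E (X, R) (X', R') \<longleftrightarrow> gen_pos g V E (X', R') \<and> (prefix X X' \<or> prefix X' X) \<and>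
     card ((set X - set X') \<union> (set X' - set X)) = 1 \<and>
     (\<forall>v'\<in>R'. \<exists>v\<in>R. robber_moves g E (V - (set X \<inter> set X')) v v')"
  using gen_pos_not_special[OF assms] assms unfolding is_succ_def robber_moves_def Let_def by auto

lemma is_succ_gen_pos: "is_succ g V E p q \<Longrightarrow> gen_pos g V E q"
  unfolding is_succ_def by (auto split: if_splits)

lemma gen_pos_subset: "gen_pos g V E (X, R) \<Longrightarrow> set X \<subseteq> V \<and> R \<subseteq> V - set X"
  unfolding gen_pos_def by auto

lemma gen_pos_empty: "set X \<subseteq> V \<Longrightarrow> gen_pos g V E (X, {})"
  unfolding gen_pos_def succ_closed_def union_sccs_def by (cases g) auto

lemma is_pos_init: "is_pos g V E ([], V)"
proof (cases "gen_pos g V E ([], V)")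
  case True
  then show ?thesis unfolding is_pos_def by simp
next
  case False
  have "g \<in> {GV, GVSC}"
  proof (rule ccontr)
    assume "g \<notin> {GV, GVSC}"
    then have "g = GI \<or> g = GISC" by (cases g) auto
    then have "gen_pos g V E ([], V)"
      unfolding gen_pos_def succ_closed_def union_sccs_def using scc_of_subset[of E V] by auto
    then show False using False by simp
  qed
  then show ?thesis using False unfolding is_pos_def special_pos_def by simp
qed

lemma gen_pos_reach_closed:
  assumes "gen_pos g V E (X, R)" "g \<in> {GI, GV}" "w \<in> R" "reach E (V - set X) w y"
  shows "y \<in> R"
proof -
  have "succ_closed E (V - set X) R" using assms(1,2) unfolding gen_pos_def by auto
  then show ?thesis
    using rtrancl_Er_closed[of w y E "V - set X" R] assms(3,4) unfolding reach_def succ_closed_def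
    by blast
qed

lemma gen_pos_scc_of_subset:
  assumes "gen_pos g V E (X, R)" "w \<in> R"
  shows "scc_of E (V - set X) w \<subseteq> R"
proof (cases "g \<in> {GI, GV}")
  case True
  show ?thesis
  proof
    fix y assume "y \<in> scc_of E (V - set X) w"
    then have "reach E (V - set X) w y" unfolding scc_of_def by simp
    then show "y \<in> R" by (rule gen_pos_reach_closed[OF assms(1) True assms(2)])
  qed
next
  case False
  then have "union_sccs E (V - set X) R \<or> R \<in> sccs E (V - set X)"
    using assms unfolding gen_pos_def by (cases g) auto
  then show ?thesis
    using scc_of_eq_sccs[of R E "V - set X" w] assms(2) unfolding union_sccs_def by auto
qed

lemma robber_moves_closed:
  assumes "gen_pos g V E (X, R)" "v \<in> R" "robber_moves g E (V - set X) v v'"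
  shows "v' \<in> R"
proof (cases "g \<in> {GI, GV}")
  case True
  then show ?thesis
    using gen_pos_reach_closed[OF assms(1) True assms(2)] assms(3) unfolding robber_moves_def by simp
next
  case False
  then show ?thesis
    using gen_pos_scc_of_subset[OF assms(1,2)] assms(3) unfolding robber_moves_def by auto
qed

lemma butlast_symdiff:
  assumes "distinct X" "X \<noteq> []"
  shows "(set X - set (butlast X)) \<union> (set (butlast X) - set X) = {last X}"
proof -
  have X: "X = butlast X @ [last X]" using assms(2) by simp
  have "last X \<notin> set (butlast X)"
    using assms(1) X by (metis distinct_append not_distinct_conv_prefix)
  moreover have "set X = insert (last X) (set (butlast X))"
    by (subst X) auto
  ultimately show ?thesis by auto
qed

text \<open>Since X may repeat vertices, dropping its last entry need not change \<open>set X\<close>.\<close>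

lemma ex_prefix_symdiff_1:
  "X \<noteq> [] \<Longrightarrow> \<exists>X'. prefix X' X \<and> card ((set X - set X') \<union> (set X' - set X)) = 1"
proof (induction X rule: rev_induct)
  case Nil
  then show ?case by simp
next
  case (snoc a Y)
  show ?case
  proof (cases "a \<in> set Y")
    case False
    then have "(set (Y @ [a]) - set Y) \<union> (set Y - set (Y @ [a])) = {a}" by auto
    then show ?thesis by (intro exI[of _ Y]) simp
  next
    case True
    then have "Y \<noteq> []" by auto
    then obtain Y' where "prefix Y' Y" "card ((set Y - set Y') \<union> (set Y' - set Y)) = 1"
      using snoc.IH by blast
    moreover have "set (Y @ [a]) = set Y" using True by auto
    ultimately show ?thesis by (intro exI[of _ Y']) auto
  qed
qed

lemma ex_is_succ:
  assumes "is_pos g V E p" "V \<noteq> {}"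
  shows "\<exists>X' R'. is_succ g V E p (X', R')"
proof (cases "special_pos g V E p")
  case True
  then show ?thesis using gen_pos_empty[of "[]" V g E] unfolding is_succ_def by auto
next
  case False
  obtain X R where p: "p = (X, R)" by fastforce
  have gp: "gen_pos g V E (X, R)" using assms(1) False p unfolding is_pos_def by auto
  have XV: "set X \<subseteq> V" using gen_pos_subset[OF gp] by simp
  show ?thesis
  proof (cases "X = []")
    case True
    obtain v where "v \<in> V" using assms(2) by blast
    then have "is_succ g V E (X, R) ([v], {})"
      unfolding is_succ_gen_pos_iff[OF gp] using gen_pos_empty[of "[v]" V g E] True by simp
    then show ?thesis using p by blast
  next
    case False
    obtain X' where X': "prefix X' X" "card ((set X - set X') \<union> (set X' - set X)) = 1"
      using ex_prefix_symdiff_1[OF False] by blast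
    have "set X' \<subseteq> V" using XV set_mono_prefix[OF X'(1)] by simp
    then have "gen_pos g V E (X', {})" by (rule gen_pos_empty)
    then have "is_succ g V E (X, R) (X', {})"
      unfolding is_succ_gen_pos_iff[OF gp] using X' by blast
    then show ?thesis using p by blast
  qed
qed

section \<open>Upper bound: a monotone searcher strategy\<close>

text \<open>The searchers keep the invariant that each searcher was placed on a vertex \<open>x\<close> that is
  optimal for the cycle rank of its component in the graph left free by the searchers
  below it, and that this component lies in the zone of the searcher below.\<close>

definition zone :: "'a set \<Rightarrow> ('a \<times> 'a) set \<Rightarrow> 'a list \<Rightarrow> 'a set" where
  "zone V E X = (if X = [] then V else scc_of E (V - set (butlast X)) (last X))"

definition optimal_placement :: "'a set \<Rightarrow> ('a \<times> 'a) set \<Rightarrow> 'a list \<Rightarrow> 'a \<Rightarrow> bool" where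
  "optimal_placement V E Y x \<longleftrightarrow> x \<in> V - set Y \<and> scc_of E (V - set Y) x \<subseteq> zone V E Y \<and>
     (\<forall>u \<in> scc_of E (V - set Y) x.
        cr E (scc_of E (V - set Y) x - {x}) \<le> cr E (scc_of E (V - set Y) x - {u}))"

definition optimal_stack :: "'a set \<Rightarrow> ('a \<times> 'a) set \<Rightarrow> 'a list \<Rightarrow> bool" where
  "optimal_stack V E X \<longleftrightarrow> (\<forall>Y x. prefix (Y @ [x]) X \<longrightarrow> optimal_placement V E Y x)"

text \<open>The robber territory R can enter the zone of any searcher only from inside that zone, so
  lifting a searcher whose zone R has left cannot help the robber.\<close>

definition zones_guarded :: "'a set \<Rightarrow> ('a \<times> 'a) set \<Rightarrow> 'a list \<Rightarrow> 'a set \<Rightarrow> bool" where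
  "zones_guarded V E X R \<longleftrightarrow> (\<forall>Y x. prefix (Y @ [x]) X \<longrightarrow> (\<forall>u w. (u, w) \<in> E \<longrightarrow> u \<in> R \<longrightarrow>
      w \<in> scc_of E (V - set Y) x \<longrightarrow> u \<in> scc_of E (V - set Y) x))"

lemma zone_Nil [simp]: "zone V E [] = V"
  unfolding zone_def by simp

lemma zone_snoc [simp]: "zone V E (Y @ [x]) = scc_of E (V - set Y) x"
  unfolding zone_def by simp

lemma zone_scc_of_subset:
  assumes "w \<in> zone V E X"
  shows "scc_of E (V - set X) w \<subseteq> zone V E X"
proof (cases "X = []")
  case True
  then show ?thesis using scc_of_subset by simp
next
  case False
  then have Z: "zone V E X = scc_of E (V - set (butlast X)) (last X)"
    unfolding zone_def by simp
  have "set (butlast X) \<subseteq> set X" by (rule set_mono_prefix[OF prefixeq_butlast])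
  then have "scc_of E (V - set X) w \<subseteq> scc_of E (V - set (butlast X)) w"
    by (intro scc_of_mono) blast
  also have "\<dots> = zone V E X" using scc_of_eq assms Z by metis
  finally show ?thesis .
qed

lemma optimal_stack_prefix: "optimal_stack V E X \<Longrightarrow> prefix X' X \<Longrightarrow> optimal_stack V E X'"
  unfolding optimal_stack_def using prefix_order.trans by blast

lemma optimal_stack_snoc:
  "optimal_stack V E X \<Longrightarrow> optimal_placement V E X v \<Longrightarrow> optimal_stack V E (X @ [v])"
  unfolding optimal_stack_def by (auto simp: prefix_snoc)

lemma zones_guarded_prefix:
  "zones_guarded V E X R \<Longrightarrow> prefix X' X \<Longrightarrow> R' \<subseteq> R \<Longrightarrow> zones_guarded V E X' R'"
  unfolding zones_guarded_def using prefix_order.trans by blast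

lemma optimal_stack_length:
  assumes "finite V"
  shows "optimal_stack V E X \<Longrightarrow> X \<noteq> [] \<Longrightarrow> cr E (zone V E X) + length X \<le> 1 + cr E V"
proof (induction X rule: rev_induct)
  case Nil
  then show ?case by simp
next
  case (snoc x Y)
  have opt: "optimal_placement V E Y x"
    using snoc.prems(1) unfolding optimal_stack_def by simp
  define S where "S = scc_of E (V - set Y) x"
  have ZS: "zone V E (Y @ [x]) = S" using S_def by simp
  show ?case
  proof (cases "Y = []")
    case True
    have "S \<subseteq> V" using scc_of_subset[of E "V - set Y" x] S_def by blast
    then have "cr E S \<le> cr E V" by (rule cr_mono[OF assms])
    then show ?thesis using ZS True by simp
  next
    case False
    have IH: "cr E (zone V E Y) + length Y \<le> 1 + cr E V"
      using snoc.IH[OF optimal_stack_prefix[OF snoc.prems(1)] False] by simp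
    define Z where "Z = zone V E Y"
    define l where "l = last Y"
    have Y: "Y = butlast Y @ [l]" using False l_def by simp
    have "prefix (butlast Y @ [l]) (Y @ [x])" using Y by (metis prefixI)
    then have optl: "optimal_placement V E (butlast Y) l"
      using snoc.prems(1) unfolding optimal_stack_def by blast
    have Z_eq: "Z = scc_of E (V - set (butlast Y)) l"
      using Z_def zone_snoc Y by metis
    have lW: "l \<in> V - set (butlast Y)" using optl unfolding optimal_placement_def by simp
    have lZ: "l \<in> Z" using scc_of_refl[OF lW] Z_eq by simp
    have scZ: "strongly_connected E Z" using strongly_connected_scc_of[OF lW] Z_eq by simp
    have "Z \<subseteq> V" using scc_of_subset[of E "V - set (butlast Y)" l] Z_eq by blast
    then have finZ: "finite Z" using assms by (rule finite_subset)
    have "S \<subseteq> Z" using opt S_def Z_def unfolding optimal_placement_def by simp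
    moreover have "S \<subseteq> V - set Y" using scc_of_subset S_def by simp
    moreover have "l \<in> set Y" using False l_def by simp
    ultimately have SZ: "S \<subseteq> Z - {l}" by blast
    have "x \<in> V - set Y" using opt unfolding optimal_placement_def by simp
    then have xS: "x \<in> S" unfolding S_def by (rule scc_of_refl)
    have cyZ: "\<not> acyclic_on E Z"
      using strongly_connected_not_acyclic_on[OF scZ lZ, of x] xS SZ by blast
    have "cr E Z = 1 + cr E (Z - {l})"
      using cr_strongly_connected_argmin[OF finZ cyZ scZ lZ] optl Z_eq
      unfolding optimal_placement_def by simp
    moreover have "cr E S \<le> cr E (Z - {l})" using cr_mono[OF _ SZ] finZ by simp
    ultimately show ?thesis using IH ZS Z_def by simp
  qed
qed

definition target_scc :: "'a set \<Rightarrow> ('a \<times> 'a) set \<Rightarrow> 'a list \<Rightarrow> 'a set \<Rightarrow> 'a set" where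
  "target_scc V E X R = (SOME C. C \<in> sccs E (V - set X) \<and> C \<subseteq> R \<inter> zone V E X \<and>
      (\<forall>u w. (u, w) \<in> E \<longrightarrow> u \<in> R \<inter> zone V E X - C \<longrightarrow> w \<notin> C))"

definition target_vertex :: "'a set \<Rightarrow> ('a \<times> 'a) set \<Rightarrow> 'a list \<Rightarrow> 'a set \<Rightarrow> 'a" where
  "target_vertex V E X R = (SOME v. v \<in> target_scc V E X R \<and>
      (\<forall>u \<in> target_scc V E X R. cr E (target_scc V E X R - {v}) \<le> cr E (target_scc V E X R - {u})))"

definition search_rule :: "gvar \<Rightarrow> 'a set \<Rightarrow> ('a \<times> 'a) set \<Rightarrow> 'a position \<Rightarrow> 'a list" where
  "search_rule g V E p = (case p of (X, R) \<Rightarrow>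
     if special_pos g V E p then []
     else if R = {} then (if X = [] then [SOME v. v \<in> V] else butlast X)
     else if R \<inter> zone V E X = {} then butlast X
     else X @ [target_vertex V E X R])"

text \<open>Outside the positions reached under the invariant the rule may be illegal; there the
  strategy falls back to an arbitrary legal move.\<close>

definition lifo_strategy :: "gvar \<Rightarrow> 'a set \<Rightarrow> ('a \<times> 'a) set \<Rightarrow> 'a position \<Rightarrow> 'a list" where
  "lifo_strategy g V E p = (if \<exists>R'. is_succ g V E p (search_rule g V E p, R') then search_rule g V E p
     else SOME X'. \<exists>R'. is_succ g V E p (X', R'))"

definition searcher_inv :: "gvar \<Rightarrow> 'a set \<Rightarrow> ('a \<times> 'a) set \<Rightarrow> 'a list \<Rightarrow> 'a set \<Rightarrow> bool" where
  "searcher_inv g V E X R \<longleftrightarrow> distinct X \<and> length X \<le> 1 + cr E V \<and>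
     (R \<noteq> {} \<longrightarrow> optimal_stack V E X \<and> zones_guarded V E X R \<and> (g = GVSC \<longrightarrow> R \<subseteq> zone V E X))"

lemma is_strategy_lifo_strategy:
  assumes "V \<noteq> {}"
  shows "is_strategy g V E (lifo_strategy g V E)"
  unfolding is_strategy_def
proof (intro allI impI)
  fix p assume "is_pos g V E p"
  then have ex: "\<exists>X' R'. is_succ g V E p (X', R')" using ex_is_succ[OF _ assms] by blast
  show "\<exists>R'. is_succ g V E p (lifo_strategy g V E p, R')"
    using someI_ex[OF ex] unfolding lifo_strategy_def by auto
qed

lemma search_rule_gen_pos:
  assumes "gen_pos g V E (X, R)"
  shows "search_rule g V E (X, R) = (if R = {} then (if X = [] then [SOME v. v \<in> V] else butlast X)
     else if R \<inter> zone V E X = {} then butlast X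
     else X @ [target_vertex V E X R])"
  unfolding search_rule_def using gen_pos_not_special[OF assms] by simp

lemma target_scc:
  assumes "finite V" "gen_pos g V E (X, R)" "R \<inter> zone V E X \<noteq> {}"
  shows "target_scc V E X R \<in> sccs E (V - set X)" and "target_scc V E X R \<subseteq> R \<inter> zone V E X"
    and "\<And>u w. (u, w) \<in> E \<Longrightarrow> u \<in> R \<inter> zone V E X - target_scc V E X R \<Longrightarrow>
      w \<notin> target_scc V E X R"
proof -
  define U where "U = R \<inter> zone V E X"
  have UW: "U \<subseteq> V - set X" using gen_pos_subset[OF assms(2)] U_def by blast
  then have finU: "finite U" using assms(1) finite_subset by blast
  have "scc_of E (V - set X) w \<subseteq> U" if "w \<in> U" for w
  proof -
    have wR: "w \<in> R" and wZ: "w \<in> zone V E X" using that U_def by auto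
    have "scc_of E (V - set X) w \<subseteq> R" using gen_pos_scc_of_subset[OF assms(2) wR] .
    moreover have "scc_of E (V - set X) w \<subseteq> zone V E X" using zone_scc_of_subset[OF wZ] .
    ultimately show ?thesis unfolding U_def by blast
  qed
  then have "\<exists>C. C \<in> sccs E (V - set X) \<and> C \<subseteq> U \<and> (\<forall>u w. (u, w) \<in> E \<longrightarrow> u \<in> U - C \<longrightarrow> w \<notin> C)"
    using initial_scc_exists[OF finU _ UW] assms(3) U_def by blast
  from someI_ex[OF this[unfolded U_def]]
  show "target_scc V E X R \<in> sccs E (V - set X)" "target_scc V E X R \<subseteq> R \<inter> zone V E X"
    "\<And>u w. (u, w) \<in> E \<Longrightarrow> u \<in> R \<inter> zone V E X - target_scc V E X R \<Longrightarrow> w \<notin> target_scc V E X R"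
    unfolding target_scc_def by blast+
qed

lemma target_vertex:
  assumes "finite V" "gen_pos g V E (X, R)" "R \<inter> zone V E X \<noteq> {}"
  shows "target_vertex V E X R \<in> target_scc V E X R"
    and "\<forall>u \<in> target_scc V E X R. cr E (target_scc V E X R - {target_vertex V E X R})
      \<le> cr E (target_scc V E X R - {u})"
proof -
  define C where "C = target_scc V E X R"
  have "strongly_connected E C" "C \<subseteq> V"
    using sccsD[OF target_scc(1)[OF assms]] C_def by auto
  then have "\<exists>v\<in>C. \<forall>u\<in>C. cr E (C - {v}) \<le> cr E (C - {u})"
    using ex_cr_argmin[of C E] assms(1) finite_subset unfolding strongly_connected_def by blast
  from someI_ex[OF this[unfolded Bex_def]]
  show "target_vertex V E X R \<in> target_scc V E X R"
    "\<forall>u \<in> target_scc V E X R. cr E (target_scc V E X R - {target_vertex V E X R})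
      \<le> cr E (target_scc V E X R - {u})"
    unfolding target_vertex_def C_def by blast+
qed

lemma search_rule_is_succ:
  assumes "finite V" "V \<noteq> {}" and gp: "gen_pos g V E (X, R)" and "distinct X"
  shows "is_succ g V E (X, R) (search_rule g V E (X, R), {})"
proof -
  have XV: "set X \<subseteq> V" and RV: "R \<subseteq> V - set X" using gen_pos_subset[OF gp] by auto
  consider "R = {}" "X = []" | "X \<noteq> []" "R \<inter> zone V E X = {}"
    | "R \<inter> zone V E X \<noteq> {}"
    using RV by fastforce
  then show ?thesis
  proof cases
    case 1
    define v where "v = (SOME v. v \<in> V)"
    have "v \<in> V" unfolding v_def using assms(2) by (simp add: some_in_eq)
    then have "gen_pos g V E ([v], {})" using gen_pos_empty[of "[v]" V g E] by simp
    then show ?thesis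
      unfolding is_succ_gen_pos_iff[OF gp] using 1 search_rule_gen_pos[OF gp] v_def by simp
  next
    case 2
    have "set (butlast X) \<subseteq> V" using set_mono_prefix[OF prefixeq_butlast[of X]] XV by (rule subset_trans)
    then have "gen_pos g V E (butlast X, {})" by (rule gen_pos_empty)
    moreover have "search_rule g V E (X, R) = butlast X" using 2 search_rule_gen_pos[OF gp] by auto
    ultimately show ?thesis
      unfolding is_succ_gen_pos_iff[OF gp] using prefixeq_butlast[of X] butlast_symdiff[OF assms(4) 2(1)]
      by simp
  next
    case 3
    define v where "v = target_vertex V E X R"
    have "v \<in> V - set X"
      using target_vertex(1)[OF assms(1) gp 3] target_scc(2)[OF assms(1) gp 3] RV v_def by blast
    then have "gen_pos g V E (X @ [v], {})" "(set X - set (X @ [v])) \<union> (set (X @ [v]) - set X) = {v}"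
      using gen_pos_empty[of "X @ [v]" V g E] XV by auto
    moreover have "search_rule g V E (X, R) = X @ [v]" using 3 search_rule_gen_pos[OF gp] v_def by auto
    ultimately show ?thesis unfolding is_succ_gen_pos_iff[OF gp] by simp
  qed
qed

lemma lifo_strategy_eq_search_rule:
  assumes "finite V" "V \<noteq> {}" "gen_pos g V E (X, R)" "distinct X"
  shows "lifo_strategy g V E (X, R) = search_rule g V E (X, R)"
  using search_rule_is_succ[OF assms] unfolding lifo_strategy_def by auto

lemma is_succ_place_subset:
  assumes gp: "gen_pos g V E (X, R)" and su: "is_succ g V E (X, R) (X', R')"
    and "set X \<subseteq> set X'"
  shows "R' \<subseteq> R"
proof
  fix v' assume "v' \<in> R'"
  then obtain v where "v \<in> R" "robber_moves g E (V - (set X \<inter> set X')) v v'"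
    using su unfolding is_succ_gen_pos_iff[OF gp] by blast
  moreover have "set X \<inter> set X' = set X" using assms(3) by blast
  ultimately show "v' \<in> R" using robber_moves_closed[OF gp] by simp
qed

lemma is_succ_lift_subset:
  assumes gp: "gen_pos g V E (X, R)" and su: "is_succ g V E (X, R) (butlast X, R')"
    and "distinct X" "X \<noteq> []" and disj: "R \<inter> zone V E X = {}" and guard: "zones_guarded V E X R"
  shows "R' \<subseteq> R"
proof
  define Y where "Y = butlast X"
  define l where "l = last X"
  have XY: "X = Y @ [l]" using assms(4) Y_def l_def by simp
  have setX: "V - set X = (V - set Y) - {l}" using XY by auto
  have "distinct (Y @ [l])" "set (Y @ [l]) \<subseteq> V"
    using XY assms(3) gen_pos_subset[OF gp] by simp_all
  then have lW: "l \<in> V - set Y" by simp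
  have Z: "zone V E X = scc_of E (V - set Y) l" using XY zone_snoc by metis
  have RX: "R \<subseteq> V - set X" using gen_pos_subset[OF gp] by blast
  have no_entry: "u \<notin> R" if "(u, l) \<in> E" for u
  proof
    assume "u \<in> R"
    moreover have "l \<in> scc_of E (V - set Y) l" using scc_of_refl[OF lW] .
    moreover have "prefix (Y @ [l]) X" using XY by simp
    ultimately have "u \<in> scc_of E (V - set Y) l"
      using guard that unfolding zones_guarded_def by blast
    then show False using \<open>u \<in> R\<close> disj Z by blast
  qed
  fix v' assume "v' \<in> R'"
  moreover have "set X \<inter> set (butlast X) = set Y"
    using set_mono_prefix[OF prefixeq_butlast[of X]] Y_def by blast
  ultimately obtain v where v: "v \<in> R" "robber_moves g E (V - set Y) v v'"
    using su unfolding is_succ_gen_pos_iff[OF gp] by auto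
  show "v' \<in> R"
  proof (cases "g \<in> {GI, GV}")
    case True
    have closed: "succ_closed E (V - set X) R" using gp True unfolding gen_pos_def by auto
    have closed_Y: "w \<in> R" if "(u, w) \<in> E" "u \<in> R" "w \<in> V - set Y" for u w
      using that closed no_entry setX unfolding succ_closed_def by (cases "w = l") auto
    have "reach E (V - set Y) v v'" using v(2) True unfolding robber_moves_def by simp
    then have "(v, v') \<in> (Er E (V - set Y))\<^sup>*" unfolding reach_def by simp
    from rtrancl_Er_closed[OF this v(1) closed_Y] show ?thesis by (rule conjunct1)
  next
    case False
    have "v \<in> V - set Y" using v(1) RX setX by blast
    moreover have "l \<notin> scc_of E (V - set Y) v"
    proof
      assume "l \<in> scc_of E (V - set Y) v"
      then have "v \<in> zone V E X" using scc_of_sym Z by metis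
      then show False using v(1) disj by blast
    qed
    ultimately have "scc_of E (V - set X) v = scc_of E (V - set Y) v"
      unfolding setX by (rule scc_of_Diff_notin)
    then show ?thesis
      using v(2) False gen_pos_scc_of_subset[OF gp v(1)] unfolding robber_moves_def by auto
  qed
qed

lemma zones_guarded_snoc:
  assumes guard: "zones_guarded V E X R" and "R' \<subseteq> R" "R \<subseteq> V"
    and C: "C = scc_of E (V - set X) v" "C \<subseteq> zone V E X"
    and initial: "\<And>u w. (u, w) \<in> E \<Longrightarrow> u \<in> R \<inter> zone V E X - C \<Longrightarrow> w \<notin> C"
  shows "zones_guarded V E (X @ [v]) R'"
  unfolding zones_guarded_def
proof (intro allI impI)
  fix Y x u w
  assume pre: "prefix (Y @ [x]) (X @ [v])" and uw: "(u, w) \<in> E" "u \<in> R'" "w \<in> scc_of E (V - set Y) x"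
  have uR: "u \<in> R" using uw(2) assms(2) by blast
  from pre have "Y @ [x] = X @ [v] \<or> prefix (Y @ [x]) X" by (simp add: prefix_snoc)
  then consider "Y = X" "x = v" | "prefix (Y @ [x]) X" by auto
  then show "u \<in> scc_of E (V - set Y) x"
  proof cases
    case 1
    have "u \<in> zone V E X"
    proof (cases "X = []")
      case True
      then show ?thesis using uR assms(3) by auto
    next
      case False
      then have pre': "prefix (butlast X @ [last X]) X" by simp
      have Z: "zone V E X = scc_of E (V - set (butlast X)) (last X)"
        using False unfolding zone_def by simp
      have "w \<in> zone V E X" using uw(3) C unfolding 1 by blast
      then show ?thesis
        using guard[unfolded zones_guarded_def, rule_format, OF pre' uw(1) uR] Z by simp
    qed
    moreover have "w \<in> C" using uw(3) C(1) unfolding 1 by simp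
    ultimately have "u \<in> C" using initial[OF uw(1)] uR by blast
    then show ?thesis using C(1) unfolding 1 by simp
  next
    case 2
    show ?thesis by (rule guard[unfolded zones_guarded_def, rule_format, OF 2 uw(1) uR uw(3)])
  qed
qed

lemma searcher_inv_Nil: "R \<subseteq> V \<Longrightarrow> searcher_inv g V E [] R"
  unfolding searcher_inv_def optimal_stack_def zones_guarded_def by simp

lemma searcher_inv_lift:
  assumes inv: "searcher_inv g V E X R" and "R \<noteq> {}" "R \<inter> zone V E X = {}" "R' \<subseteq> R"
  shows "searcher_inv g V E (butlast X) R'" and "g \<noteq> GVSC"
proof -
  show "g \<noteq> GVSC" using inv assms(2,3) unfolding searcher_inv_def by blast
  moreover have "optimal_stack V E (butlast X)" "zones_guarded V E (butlast X) R'"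
    using inv assms(2,4) optimal_stack_prefix[OF _ prefixeq_butlast]
      zones_guarded_prefix[OF _ prefixeq_butlast] unfolding searcher_inv_def by blast+
  ultimately show "searcher_inv g V E (butlast X) R'"
    using inv unfolding searcher_inv_def by (simp add: distinct_butlast le_trans[OF diff_le_self])
qed

lemma searcher_inv_place:
  assumes "finite V" and gp: "gen_pos g V E (X, R)" and inv: "searcher_inv g V E X R"
    and meets: "R \<inter> zone V E X \<noteq> {}" and su: "is_succ g V E (X, R) (X @ [target_vertex V E X R], R')"
  shows "searcher_inv g V E (X @ [target_vertex V E X R]) R'" and "R' \<subseteq> R" and "card R' < card R"
proof -
  define C where "C = target_scc V E X R"
  define v where "v = target_vertex V E X R"
  have CS: "C \<in> sccs E (V - set X)" and CR: "C \<subseteq> R \<inter> zone V E X"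
    unfolding C_def using target_scc(1,2)[OF assms(1) gp meets] by auto
  have vC: "v \<in> C" and vopt: "\<forall>u \<in> C. cr E (C - {v}) \<le> cr E (C - {u})"
    unfolding C_def v_def using target_vertex[OF assms(1) gp meets] by auto
  have RV: "R \<subseteq> V - set X" using gen_pos_subset[OF gp] by simp
  have vR: "v \<in> R" and vX: "v \<in> V - set X" using vC CR RV by auto
  have Cv: "scc_of E (V - set X) v = C" using scc_of_eq_sccs[OF CS vC] .
  show sub: "R' \<subseteq> R" by (rule is_succ_place_subset[OF gp su]) auto
  have "v \<notin> R'" using gen_pos_subset[OF is_succ_gen_pos[OF su]] v_def by auto
  then have "R' \<subseteq> R - {v}" using sub by blast
  moreover have "finite R" using RV assms(1) finite_subset by blast
  ultimately show "card R' < card R"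
    using card_mono[of "R - {v}" R'] card_Diff1_less[of R v] vR by fastforce
  have R_ne: "R \<noteq> {}" using meets by blast
  have "optimal_stack V E X" using inv R_ne unfolding searcher_inv_def by blast
  moreover have "optimal_placement V E X v"
    unfolding optimal_placement_def using vX Cv CR vopt by auto
  ultimately have opt: "optimal_stack V E (X @ [v])" by (rule optimal_stack_snoc)
  have guard: "zones_guarded V E (X @ [v]) R'"
  proof (rule zones_guarded_snoc[OF _ sub _ Cv[symmetric]])
    show "zones_guarded V E X R" using inv R_ne unfolding searcher_inv_def by blast
    show "R \<subseteq> V" "C \<subseteq> zone V E X" using RV CR by auto
    show "w \<notin> C" if "(u, w) \<in> E" "u \<in> R \<inter> zone V E X - C" for u w
      using target_scc(3)[OF assms(1) gp meets that(1)] that(2) C_def by simp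
  qed
  have vsc: "R' \<subseteq> zone V E (X @ [v])" if "g = GVSC"
  proof -
    have "R \<in> sccs E (V - set X)" using gp that R_ne unfolding gen_pos_def by auto
    then have "R = C" using scc_of_eq_sccs vR Cv by metis
    then show ?thesis using sub Cv by simp
  qed
  have "length (X @ [v]) \<le> 1 + cr E V"
    using optimal_stack_length[OF assms(1) opt] by simp
  then show "searcher_inv g V E (X @ [target_vertex V E X R]) R'"
    using inv vX opt guard vsc v_def unfolding searcher_inv_def by auto
qed

text \<open>Placing a searcher adds one to the stack but removes at least one vertex from the robber
  territory; lifting shrinks the stack without enlarging the territory.\<close>

definition search_potential :: "'a position \<Rightarrow> nat" where
  "search_potential p = 2 * card (snd p) + length (fst p)"

lemma lifo_strategy_step:
  assumes "finite V" "V \<noteq> {}" and gp: "gen_pos g V E (X, R)" and inv: "searcher_inv g V E X R"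
    and su: "is_succ g V E (X, R) (X', R')" and X': "X' = lifo_strategy g V E (X, R)"
  shows "searcher_inv g V E X' R' \<and> R' \<subseteq> R \<and>
    (R \<noteq> {} \<longrightarrow> search_potential (X', R') < search_potential (X, R)) \<and>
    (g = GVSC \<longrightarrow> R \<noteq> {} \<longrightarrow> prefix X X')"
proof -
  have dX: "distinct X" using inv unfolding searcher_inv_def by simp
  have rule: "X' = search_rule g V E (X, R)"
    using X' lifo_strategy_eq_search_rule[OF assms(1,2) gp dX] by simp
  have RV: "R \<subseteq> V - set X" using gen_pos_subset[OF gp] by simp
  consider "R = {}" | "R \<noteq> {}" "R \<inter> zone V E X = {}" | "R \<inter> zone V E X \<noteq> {}" by blast
  then show ?thesis
  proof cases
    case 1
    then have "R' = {}" using su unfolding is_succ_gen_pos_iff[OF gp] by auto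
    moreover have "X' = [SOME v. v \<in> V] \<or> X' = butlast X"
      using rule search_rule_gen_pos[OF gp] 1 by (auto split: if_splits)
    moreover have "length X \<le> 1 + cr E V" using inv unfolding searcher_inv_def by simp
    ultimately show ?thesis using 1 dX unfolding searcher_inv_def by (auto simp: distinct_butlast)
  next
    case 2
    have X'_eq: "X' = butlast X" using rule search_rule_gen_pos[OF gp] 2 by simp
    have X_ne: "X \<noteq> []"
    proof
      assume "X = []"
      then have "R \<inter> zone V E X = R" using RV by auto
      then show False using 2 by simp
    qed
    have "zones_guarded V E X R" using inv 2(1) unfolding searcher_inv_def by blast
    then have sub: "R' \<subseteq> R"
      using is_succ_lift_subset[OF gp su[unfolded X'_eq] dX X_ne 2(2)] by blast
    moreover have "finite R" using RV assms(1) finite_subset by blast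
    ultimately have "card R' \<le> card R" by (rule card_mono[rotated])
    moreover have "length (butlast X) < length X" using X_ne by simp
    ultimately have "search_potential (butlast X, R') < search_potential (X, R)"
      unfolding search_potential_def by simp
    then show ?thesis using searcher_inv_lift[OF inv 2 sub] sub X'_eq by auto
  next
    case 3
    have X'_eq: "X' = X @ [target_vertex V E X R]" using rule search_rule_gen_pos[OF gp] 3 by auto
    then show ?thesis
      using searcher_inv_place[OF assms(1) gp inv 3 su[unfolded X'_eq]]
      unfolding search_potential_def by auto
  qed
qed

lemma special_pos_step:
  assumes "finite V" "special_pos g V E p" "is_succ g V E p (X', R')"
  shows "X' = [] \<and> R' \<subset> snd p \<and> searcher_inv g V E X' R'"
proof -
  have p: "p = ([], V)" "\<not> gen_pos g V E ([], V)" using assms(2) unfolding special_pos_def by auto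
  have gq: "gen_pos g V E (X', R')" and X': "X' = []" using assms(2,3) unfolding is_succ_def by auto
  then have "R' \<subseteq> V" using gen_pos_subset by fastforce
  moreover have "R' \<noteq> V" using gq X' p(2) by blast
  ultimately show ?thesis using X' p(1) searcher_inv_Nil by auto
qed

lemma lifo_strategy_search_pos:
  assumes "finite V" "V \<noteq> {}" and cs: "complete_consistent_search g V E (lifo_strategy g V E) f len"
  shows "i \<in> idx len \<Longrightarrow> special_pos g V E (f i) \<or>
      (gen_pos g V E (f i) \<and> searcher_inv g V E (fst (f i)) (snd (f i)))"
proof (induction i)
  case 0
  have "f 0 = ([], V)" using cs unfolding complete_consistent_search_def by simp
  then show ?case using is_pos_init[of g V E] searcher_inv_Nil[of V V g E] unfolding is_pos_def by auto
next
  case (Suc i)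
  have i: "i \<in> idx len" using Suc.prems unfolding idx_def by (cases len) auto
  obtain X R X' R' where p: "f i = (X, R)" and q: "f (Suc i) = (X', R')" by fastforce
  have su: "is_succ g V E (X, R) (X', R')" and X': "X' = lifo_strategy g V E (X, R)"
    using cs Suc.prems p q unfolding complete_consistent_search_def by auto
  have "searcher_inv g V E X' R'"
  proof (cases "special_pos g V E (X, R)")
    case True
    then show ?thesis using special_pos_step[OF assms(1) True su] by blast
  next
    case False
    then have "gen_pos g V E (X, R)" "searcher_inv g V E X R" using Suc.IH[OF i] p by auto
    then show ?thesis using lifo_strategy_step[OF assms(1,2) _ _ su X'] by blast
  qed
  then show ?case using is_succ_gen_pos[OF su] q by simp
qed

lemma lifo_strategy_search_step:
  assumes "finite V" "V \<noteq> {}" and cs: "complete_consistent_search g V E (lifo_strategy g V E) f len"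
    and "Suc i \<in> idx len"
  shows "snd (f (Suc i)) \<subseteq> snd (f i) \<and>
    (snd (f i) \<noteq> {} \<longrightarrow> search_potential (f (Suc i)) < search_potential (f i)) \<and>
    (g = GVSC \<longrightarrow> snd (f i) \<noteq> {} \<longrightarrow> prefix (fst (f i)) (fst (f (Suc i))))"
proof -
  have i: "i \<in> idx len" using assms(4) unfolding idx_def by (cases len) auto
  obtain X R X' R' where p: "f i = (X, R)" and q: "f (Suc i) = (X', R')" by fastforce
  have su: "is_succ g V E (X, R) (X', R')" and X': "X' = lifo_strategy g V E (X, R)"
    using cs assms(4) p q unfolding complete_consistent_search_def by auto
  from lifo_strategy_search_pos[OF assms(1-3) i] show ?thesis
  proof
    assume sp: "special_pos g V E (f i)"
    then have X': "X' = []" and R': "R' \<subset> R" using special_pos_step[OF assms(1) _ su] p by auto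
    moreover have "X = []" "finite R" using sp p assms(1) unfolding special_pos_def by auto
    ultimately have "card R' < card R" by (simp add: psubset_card_mono)
    then show ?thesis using p q X' R' \<open>X = []\<close> unfolding search_potential_def by auto
  next
    assume "gen_pos g V E (f i) \<and> searcher_inv g V E (fst (f i)) (snd (f i))"
    then show ?thesis using lifo_strategy_step[OF assms(1,2) _ _ su X'] p q by auto
  qed
qed

lemma winning_if_potential_decreases:
  fixes m :: "'a position \<Rightarrow> nat"
  assumes "complete_consistent_search g V E \<sigma> f len"
    and "\<And>i. Suc i \<in> idx len \<Longrightarrow> snd (f i) \<noteq> {} \<Longrightarrow> m (f (Suc i)) < m (f i)"
  shows "\<exists>i\<in>idx len. snd (f i) = {}"
proof (cases len)
  case (Some n)
  then show ?thesis using assms(1) unfolding complete_consistent_search_def by auto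
next
  case None
  show ?thesis
  proof (rule ccontr)
    assume "\<not> ?thesis"
    then have "\<forall>i. (f (Suc i), f i) \<in> measure m" using assms(2) None unfolding idx_def by auto
    then have "\<exists>h. \<forall>i. (h (Suc i), h i) \<in> measure m" by (rule exI[of _ f])
    then show False using wf_measure[of m] unfolding wf_iff_no_infinite_down_chain by blast
  qed
qed

theorem lifo_strategy_upper_bound:
  assumes "digraph V E"
  shows "is_strategy g V E (lifo_strategy g V E)" and "winning_strat g V E (lifo_strategy g V E)"
    and "monotone_strat g V E (lifo_strategy g V E)"
    and "uses_at_most g V E (lifo_strategy g V E) (1 + cr E V)"
    and "g = GVSC \<Longrightarrow> stationary_strat g V E (lifo_strategy g V E)"
proof -
  have V: "finite V" "V \<noteq> {}" using assms unfolding digraph_def by auto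
  show "is_strategy g V E (lifo_strategy g V E)" using is_strategy_lifo_strategy[OF V(2)] .
  show "winning_strat g V E (lifo_strategy g V E)"
    unfolding winning_strat_def
  proof (intro allI impI)
    fix f len assume cs: "complete_consistent_search g V E (lifo_strategy g V E) f len"
    show "\<exists>i\<in>idx len. snd (f i) = {}"
      using winning_if_potential_decreases[OF cs] lifo_strategy_search_step[OF V cs] by blast
  qed
  show "monotone_strat g V E (lifo_strategy g V E)"
    unfolding monotone_strat_def using lifo_strategy_search_step[OF V] by blast
  show "uses_at_most g V E (lifo_strategy g V E) (1 + cr E V)"
    unfolding uses_at_most_def
    using lifo_strategy_search_pos[OF V] unfolding searcher_inv_def special_pos_def by fastforce
  show "stationary_strat g V E (lifo_strategy g V E)" if "g = GVSC"
    unfolding stationary_strat_def using lifo_strategy_search_step[OF V] that by blast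
qed

section \<open>Lower bound: a robber strategy\<close>

definition reachable_from :: "('a \<times> 'a) set \<Rightarrow> 'a set \<Rightarrow> 'a set \<Rightarrow> 'a set" where
  "reachable_from E W H = {w. \<exists>h\<in>H. reach E W h w}"

lemma reachable_from_subset: "reachable_from E W H \<subseteq> W"
  unfolding reachable_from_def reach_def by auto

lemma subset_reachable_from: "H \<subseteq> W \<Longrightarrow> H \<subseteq> reachable_from E W H"
  unfolding reachable_from_def by (auto intro: reach_refl)

lemma succ_closed_reachable_from: "succ_closed E W (reachable_from E W H)"
  unfolding succ_closed_def
proof (intro conjI allI impI)
  show "reachable_from E W H \<subseteq> W" by (rule reachable_from_subset)
next
  fix u v assume uv: "(u, v) \<in> E" "u \<in> reachable_from E W H" "v \<in> W"
  then obtain h where h: "h \<in> H" "reach E W h u" unfolding reachable_from_def by blast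
  have "u \<in> W" using reachD[OF h(2)] by simp
  then have "reach E W u v" using reach_edge[OF uv(1) _ uv(3)] by simp
  then show "v \<in> reachable_from E W H"
    unfolding reachable_from_def using h(1) reach_trans[OF h(2)] by blast
qed

lemma reach_reachable_from:
  assumes "a \<in> reachable_from E W H" "reach E W a b"
  shows "reach E (reachable_from E W H) a b"
proof -
  have ab: "(a, b) \<in> (Er E W)\<^sup>*" using assms(2) unfolding reach_def by simp
  have closed: "w \<in> reachable_from E W H"
    if "(u, w) \<in> E" "u \<in> reachable_from E W H" "w \<in> W" for u w
    by (rule succ_closed_reachable_from[of E W H, unfolded succ_closed_def, THEN conjunct2,
        rule_format, OF that])
  have "b \<in> reachable_from E W H \<and> (a, b) \<in> (Er E (reachable_from E W H))\<^sup>*"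
    by (rule rtrancl_Er_closed[OF ab assms(1) closed])
  then show ?thesis using assms(1) unfolding reach_def by simp
qed

lemma sccs_reachable_from:
  assumes HS: "H \<in> sccs E W"
  shows "H \<in> sccs E (reachable_from E W H)"
proof -
  have HW: "H \<subseteq> W" using sccsD[OF HS] by simp
  have HRc: "H \<subseteq> reachable_from E W H" using subset_reachable_from[OF HW] .
  obtain h where hH: "h \<in> H" using sccsD[OF HS] unfolding strongly_connected_def by blast
  have "scc_of E (reachable_from E W H) h = H"
  proof
    show "scc_of E (reachable_from E W H) h \<subseteq> H"
      using scc_of_mono[OF reachable_from_subset[of E W H], of E h] scc_of_eq_sccs[OF HS hH]
      by simp
    show "H \<subseteq> scc_of E (reachable_from E W H) h"
    proof
      fix y assume y: "y \<in> H"
      then have "reach E W h y" "reach E W y h"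
        using scc_of_eq_sccs[OF HS hH] unfolding scc_of_def by auto
      then have "reach E (reachable_from E W H) h y" "reach E (reachable_from E W H) y h"
        using reach_reachable_from[of _ E W H] HRc hH y by auto
      then show "y \<in> scc_of E (reachable_from E W H) h" unfolding scc_of_def by simp
    qed
  qed
  then show ?thesis using scc_of_in_sccs[of h "reachable_from E W H" E] HRc hH by auto
qed

lemma initial_comp_reachable_from_scc:
  assumes HS: "H \<in> sccs E W"
  shows "initial_comp E (reachable_from E W H) H"
  unfolding initial_comp_def
proof (intro conjI notI)
  show "H \<in> sccs E (reachable_from E W H)" using sccs_reachable_from[OF HS] .
next
  assume "\<exists>u v. (u, v) \<in> E \<and> u \<in> reachable_from E W H - H \<and> v \<in> H"
  then obtain u v where uv: "(u, v) \<in> E" "u \<in> reachable_from E W H - H" "v \<in> H" by blast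
  obtain h where h: "h \<in> H" "reach E W h u" using uv(2) unfolding reachable_from_def by blast
  have "reach E W u v"
    using reach_edge[OF uv(1)] uv sccsD[OF HS] reachD[OF h(2)] by blast
  moreover have "reach E W v h" using scc_of_eq_sccs[OF HS h(1)] uv(3) unfolding scc_of_def by blast
  ultimately have "u \<in> scc_of E W h"
    using h(2) reach_trans[of E W u v h] unfolding scc_of_def by blast
  then show False using scc_of_eq_sccs[OF HS h(1)] uv(2) by simp
qed

text \<open>Every vertex of the set reachable from H is reached from H inside that set, so a
  component not meeting H has an incoming edge.\<close>

lemma initial_comp_reachable_from:
  assumes HS: "H \<in> sccs E W"
  shows "initial_comp E (reachable_from E W H) C \<longleftrightarrow> C = H"
proof
  assume C: "initial_comp E (reachable_from E W H) C"
  define Rc where "Rc = reachable_from E W H"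
  have CS: "C \<in> sccs E Rc" using C Rc_def unfolding initial_comp_def by simp
  obtain c where c: "c \<in> C" using sccsD[OF CS] unfolding strongly_connected_def by blast
  then obtain h where h: "h \<in> H" "reach E W h c"
    using sccsD[OF CS] Rc_def unfolding reachable_from_def by blast
  have "h \<in> Rc" using subset_reachable_from sccsD[OF HS] h(1) Rc_def by blast
  then have "reach E Rc h c" using reach_reachable_from[OF _ h(2)] Rc_def by simp
  then have path: "(h, c) \<in> (Er E Rc)\<^sup>*" unfolding reach_def by simp
  show "C = H"
  proof (cases "h \<in> C")
    case True
    then show ?thesis
      using scc_of_eq_sccs[OF CS True] scc_of_eq_sccs[OF sccs_reachable_from[OF HS] h(1)] Rc_def
      by simp
  next
    case False
    obtain u w where "(u, w) \<in> Er E Rc" "u \<notin> C" "w \<in> C"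
      using rtrancl_enters[OF path False c] by blast
    then show ?thesis using C Rc_def unfolding initial_comp_def Er_def by blast
  qed
next
  assume "C = H"
  then show "initial_comp E (reachable_from E W H) C" using initial_comp_reachable_from_scc[OF HS] by simp
qed

text \<open>The robber keeps to a strongly connected hideout whose cycle rank drops by at most one
  per searcher: when a searcher lands in it, he retreats to a component of maximal cycle rank
  of the rest. Lifting a searcher restores an earlier, larger hideout.\<close>

definition hideout_init :: "'a set \<Rightarrow> ('a \<times> 'a) set \<Rightarrow> 'a set" where
  "hideout_init V E = (SOME D. D \<in> sccs E V \<and> cr E V = cr E D)"

definition hideout_step :: "('a \<times> 'a) set \<Rightarrow> 'a set \<Rightarrow> 'a \<Rightarrow> 'a set" where
  "hideout_step E H x = (if x \<notin> H then H else if H - {x} = {} then {}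
     else SOME D. D \<in> sccs E (H - {x}) \<and> cr E (H - {x}) = cr E D)"

definition hideout :: "'a set \<Rightarrow> ('a \<times> 'a) set \<Rightarrow> 'a list \<Rightarrow> 'a set" where
  "hideout V E X = foldl (hideout_step E) (hideout_init V E) X"

definition robber_region :: "gvar \<Rightarrow> 'a set \<Rightarrow> ('a \<times> 'a) set \<Rightarrow> 'a list \<Rightarrow> 'a set" where
  "robber_region g V E X =
    (if g \<in> {GI, GV} then reachable_from E (V - set X) (hideout V E X) else hideout V E X)"

lemma hideout_Nil [simp]: "hideout V E [] = hideout_init V E"
  unfolding hideout_def by simp

lemma hideout_snoc [simp]: "hideout V E (X @ [x]) = hideout_step E (hideout V E X) x"
  unfolding hideout_def by simp

lemma hideout_init:
  assumes "finite V" "V \<noteq> {}"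
  shows "hideout_init V E \<in> sccs E V" and "cr E V = cr E (hideout_init V E)"
  using someI_ex[OF ex_scc_cr_eq[OF assms, unfolded Bex_def]] unfolding hideout_init_def by blast+

lemma hideout_step:
  assumes "finite H" "x \<in> H" "H - {x} \<noteq> {}"
  shows "hideout_step E H x \<in> sccs E (H - {x})" and "cr E (H - {x}) = cr E (hideout_step E H x)"
proof -
  have "\<exists>D. D \<in> sccs E (H - {x}) \<and> cr E (H - {x}) = cr E D"
    using ex_scc_cr_eq[of "H - {x}" E] assms by auto
  from someI_ex[OF this]
  show "hideout_step E H x \<in> sccs E (H - {x})" "cr E (H - {x}) = cr E (hideout_step E H x)"
    unfolding hideout_step_def using assms(2,3) by simp_all
qed

lemma hideout_step_subset:
  assumes "finite H"
  shows "hideout_step E H x \<subseteq> H - {x}"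
proof (cases "x \<in> H \<and> H - {x} \<noteq> {}")
  case True
  then show ?thesis using sccsD[OF hideout_step(1)[OF assms]] by blast
next
  case False
  then show ?thesis unfolding hideout_step_def by auto
qed

context
  fixes V :: "'a set" and E :: "('a \<times> 'a) set"
  assumes V: "finite V" "V \<noteq> {}"
begin

lemma hideout_subset: "hideout V E X \<subseteq> V - set X"
proof (induction X rule: rev_induct)
  case Nil
  then show ?case using sccsD[OF hideout_init(1)[OF V]] by simp
next
  case (snoc x X)
  have "finite (hideout V E X)" using snoc.IH V(1) finite_subset by blast
  then show ?case using snoc.IH hideout_step_subset[of "hideout V E X" E x] by auto
qed

lemma finite_hideout: "finite (hideout V E X)"
  using hideout_subset V(1) finite_subset by blast

lemma hideout_antimono: "prefix X X' \<Longrightarrow> hideout V E X' \<subseteq> hideout V E X"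
proof (induction X' rule: rev_induct)
  case Nil
  then show ?case by simp
next
  case (snoc x Y)
  show ?case
  proof (cases "X = Y @ [x]")
    case True
    then show ?thesis by simp
  next
    case False
    then have "hideout V E Y \<subseteq> hideout V E X" using snoc by (simp add: prefix_snoc)
    then show ?thesis using hideout_step_subset[OF finite_hideout[of Y], where x = x] by auto
  qed
qed

lemma hideout_in_sccs: "hideout V E X = {} \<or> hideout V E X \<in> sccs E (V - set X)"
proof (induction X rule: rev_induct)
  case Nil
  then show ?case using hideout_init(1)[OF V] by simp
next
  case (snoc x X)
  define H where "H = hideout V E X"
  have W: "V - set (X @ [x]) = (V - set X) - {x}" by auto
  consider "H = {}" | "H \<in> sccs E (V - set X)" "x \<notin> H" | "x \<in> H" "H - {x} = {}"
    | "H \<in> sccs E (V - set X)" "x \<in> H" "H - {x} \<noteq> {}"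
    using snoc H_def by blast
  then show ?case
  proof cases
    case 2
    then show ?thesis using sccs_Diff_notin[OF 2] W H_def by (simp add: hideout_step_def)
  next
    case 4
    then show ?thesis
      using sccs_Diff_sccs[OF 4(1) hideout_step(1)[OF _ 4(2,3)]] finite_hideout W H_def by simp
  qed (simp_all add: H_def hideout_step_def)
qed

text \<open>Without self-loops a cyclic strongly connected set has two vertices, so the hideout
  survives every searcher while its cycle rank is positive.\<close>

lemma hideout_cr:
  assumes "\<forall>v. (v, v) \<notin> E"
  shows "length X \<le> cr E V \<Longrightarrow> hideout V E X \<noteq> {} \<and> cr E V \<le> cr E (hideout V E X) + length X"
proof (induction X rule: rev_induct)
  case Nil
  have "hideout_init V E \<noteq> {}"
    using sccsD[OF hideout_init(1)[OF V]] unfolding strongly_connected_def by blast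
  then show ?case using hideout_init(2)[OF V] by simp
next
  case (snoc x X)
  define H where "H = hideout V E X"
  have IH: "H \<noteq> {}" "cr E V \<le> cr E H + length X" using snoc H_def by auto
  have finH: "finite H" using finite_hideout H_def by simp
  have scH: "strongly_connected E H" using hideout_in_sccs[of X] IH sccsD H_def by metis
  have cyH: "\<not> acyclic_on E H" using cr_acyclic[OF finH] IH snoc.prems by auto
  show ?case
  proof (cases "x \<in> H")
    case False
    then show ?thesis using IH H_def by (simp add: hideout_step_def)
  next
    case True
    have "H - {x} \<noteq> {}"
    proof
      assume "H - {x} = {}"
      then have "H = {x}" using True by blast
      then have "card H \<le> 1" by simp
      then show False using acyclic_on_card_le_1[OF assms finH] cyH by simp
    qed
    then have "hideout_step E H x \<in> sccs E (H - {x})" "cr E (H - {x}) = cr E (hideout_step E H x)"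
      using hideout_step[OF finH True] by auto
    moreover have "cr E H \<le> 1 + cr E (H - {x})"
      using cr_strongly_connected_le[OF finH cyH scH True] .
    ultimately show ?thesis
      using IH H_def sccsD unfolding strongly_connected_def by fastforce
  qed
qed

end

context
  fixes V :: "'a set" and E :: "('a \<times> 'a) set"
  assumes V: "finite V" "V \<noteq> {}"
begin

lemma robber_region_subset: "robber_region g V E X \<subseteq> V - set X"
  unfolding robber_region_def
  using reachable_from_subset[of E "V - set X" "hideout V E X"] hideout_subset[OF V, of E X] by auto

lemma hideout_subset_robber_region: "hideout V E X \<subseteq> robber_region g V E X"
  unfolding robber_region_def using subset_reachable_from[OF hideout_subset[OF V]] by auto

lemma gen_pos_robber_region:
  assumes "set X \<subseteq> V"
  shows "gen_pos g V E (X, robber_region g V E X)"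
proof -
  let ?W = "V - set X" and ?H = "hideout V E X"
  have H: "?H = {} \<or> ?H \<in> sccs E ?W" using hideout_in_sccs[OF V] by simp
  have unique: "reachable_from E ?W ?H = {} \<or> (\<exists>!C. initial_comp E (reachable_from E ?W ?H) C)"
  proof (cases "?H = {}")
    case True
    then show ?thesis unfolding reachable_from_def by simp
  next
    case False
    then show ?thesis using H by (simp add: initial_comp_reachable_from)
  qed
  have "union_sccs E ?W ?H"
    unfolding union_sccs_def
  proof (intro conjI ballI)
    show "?H \<subseteq> ?W" using hideout_subset[OF V] by simp
    fix v assume "v \<in> ?H"
    then show "scc_of E ?W v \<subseteq> ?H" using H scc_of_eq_sccs[of ?H E ?W v] by auto
  qed
  then show ?thesis
    using assms robber_region_subset[of g X] succ_closed_reachable_from[of E ?W ?H] unique H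
    unfolding gen_pos_def robber_region_def by (cases g) simp_all
qed

lemma robber_moves_robber_region_place:
  assumes pre: "prefix X X'" and v': "v' \<in> robber_region g V E X'"
  shows "\<exists>v \<in> robber_region g V E X. robber_moves g E (V - set X) v v'"
proof -
  have HH: "hideout V E X' \<subseteq> hideout V E X" using hideout_antimono[OF V pre] .
  show ?thesis
  proof (cases "g \<in> {GI, GV}")
    case True
    then obtain h where h: "h \<in> hideout V E X'" "reach E (V - set X') h v'"
      using v' unfolding robber_region_def reachable_from_def by auto
    have "V - set X' \<subseteq> V - set X" using set_mono_prefix[OF pre] by blast
    then have "reach E (V - set X) h v'" by (rule reach_mono[OF h(2)])
    moreover have "h \<in> robber_region g V E X" using hideout_subset_robber_region[of X g] HH h(1) by blast
    ultimately show ?thesis using True unfolding robber_moves_def by auto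
  next
    case False
    then have vH: "v' \<in> hideout V E X" using v' HH unfolding robber_region_def by auto
    then have "v' \<in> V - set X" using hideout_subset[OF V, of E X] by blast
    then have "v' \<in> scc_of E (V - set X) v'" by (rule scc_of_refl)
    moreover have "v' \<in> robber_region g V E X" using vH hideout_subset_robber_region[of X g] by blast
    ultimately show ?thesis using False unfolding robber_moves_def by auto
  qed
qed

text \<open>After a lift the robber may start anywhere in his old hideout, which lies inside the
  component that is his new hideout.\<close>

lemma robber_moves_robber_region_lift:
  assumes "\<forall>v. (v, v) \<notin> E" "length X \<le> cr E V"
    and pre: "prefix X' X" and v': "v' \<in> robber_region g V E X'"
  shows "\<exists>v \<in> robber_region g V E X. robber_moves g E (V - set X') v v'"
proof -
  have "hideout V E X \<noteq> {}" using hideout_cr[OF V assms(1,2)] by blast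
  then obtain v where v: "v \<in> hideout V E X" by blast
  then have vX': "v \<in> hideout V E X'" using hideout_antimono[OF V pre] by blast
  then have "hideout V E X' \<in> sccs E (V - set X')" using hideout_in_sccs[OF V, of E X'] by auto
  then have sv: "scc_of E (V - set X') v = hideout V E X'" using vX' by (rule scc_of_eq_sccs)
  have vR: "v \<in> robber_region g V E X" using v hideout_subset_robber_region[of X g] by blast
  show ?thesis
  proof (cases "g \<in> {GI, GV}")
    case True
    then obtain h where h: "h \<in> hideout V E X'" "reach E (V - set X') h v'"
      using v' unfolding robber_region_def reachable_from_def by auto
    have "reach E (V - set X') v h" using h(1) sv unfolding scc_of_def by auto
    then have "reach E (V - set X') v v'" using h(2) by (rule reach_trans)
    then show ?thesis using True vR unfolding robber_moves_def by auto
  next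
    case False
    then have "v' \<in> scc_of E (V - set X') v" using v' sv unfolding robber_region_def by simp
    then show ?thesis using False vR unfolding robber_moves_def by auto
  qed
qed

lemma robber_moves_robber_region:
  assumes "\<forall>v. (v, v) \<notin> E" "length X \<le> cr E V"
    and "prefix X X' \<or> prefix X' X" and "v' \<in> robber_region g V E X'"
  shows "\<exists>v \<in> robber_region g V E X. robber_moves g E (V - (set X \<inter> set X')) v v'"
proof (cases "prefix X X'")
  case True
  then have "set X \<inter> set X' = set X" using set_mono_prefix by blast
  then show ?thesis using robber_moves_robber_region_place[OF True assms(4)] by simp
next
  case False
  then have pre: "prefix X' X" using assms(3) by blast
  then have "set X \<inter> set X' = set X'" using set_mono_prefix by blast
  then show ?thesis using robber_moves_robber_region_lift[OF assms(1,2) pre assms(4)] by simp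
qed

end

lemma robber_reply:
  assumes dg: "digraph V E" and st: "is_strategy g V E \<sigma>" and ip: "is_pos g V E p"
    and len: "length (fst p) \<le> cr E V" and sub: "robber_region g V E (fst p) \<subseteq> snd p"
  shows "is_succ g V E p (\<sigma> p, if length (\<sigma> p) \<le> cr E V then robber_region g V E (\<sigma> p) else {})"
proof -
  have V: "finite V" "V \<noteq> {}" and noloop: "\<forall>v. (v, v) \<notin> E" using dg unfolding digraph_def by auto
  obtain R0 where R0: "is_succ g V E p (\<sigma> p, R0)" using st ip unfolding is_strategy_def by blast
  have sV: "set (\<sigma> p) \<subseteq> V" using gen_pos_subset[OF is_succ_gen_pos[OF R0]] by simp
  define Rq where "Rq = (if length (\<sigma> p) \<le> cr E V then robber_region g V E (\<sigma> p) else {})"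
  have gq: "gen_pos g V E (\<sigma> p, Rq)"
    unfolding Rq_def using gen_pos_robber_region[OF V sV] gen_pos_empty[OF sV] by simp
  show ?thesis
  proof (cases "special_pos g V E p")
    case True
    then have "\<sigma> p = []" using R0 unfolding is_succ_def by simp
    then show ?thesis using True gq unfolding is_succ_def Rq_def by simp
  next
    case False
    obtain X R where p: "p = (X, R)" by fastforce
    have gp: "gen_pos g V E (X, R)" using ip False p unfolding is_pos_def by simp
    have i0: "prefix X (\<sigma> p) \<or> prefix (\<sigma> p) X" "card ((set X - set (\<sigma> p)) \<union> (set (\<sigma> p) - set X)) = 1"
      using R0 p is_succ_gen_pos_iff[OF gp] by auto
    have "\<exists>v\<in>R. robber_moves g E (V - (set X \<inter> set (\<sigma> p))) v v'" if "v' \<in> Rq" for v'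
    proof -
      have "v' \<in> robber_region g V E (\<sigma> p)" using that unfolding Rq_def by (simp split: if_splits)
      then obtain v where "v \<in> robber_region g V E X" "robber_moves g E (V - (set X \<inter> set (\<sigma> p))) v v'"
        using robber_moves_robber_region[OF V noloop _ i0(1)] len p by auto
      then show ?thesis using sub p by auto
    qed
    then have "is_succ g V E (X, R) (\<sigma> p, Rq)"
      unfolding is_succ_gen_pos_iff[OF gp] using gq i0 by simp
    then show ?thesis using p Rq_def by simp
  qed
qed

definition robber_play ::
  "gvar \<Rightarrow> 'a set \<Rightarrow> ('a \<times> 'a) set \<Rightarrow> ('a position \<Rightarrow> 'a list) \<Rightarrow> nat \<Rightarrow> 'a position" where
  "robber_play g V E \<sigma> = rec_nat ([], V)
     (\<lambda>_ p. (\<sigma> p, if length (\<sigma> p) \<le> cr E V then robber_region g V E (\<sigma> p) else {}))"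

lemma robber_play_0 [simp]: "robber_play g V E \<sigma> 0 = ([], V)"
  unfolding robber_play_def by simp

lemma robber_play_Suc [simp]:
  "robber_play g V E \<sigma> (Suc i) = (\<sigma> (robber_play g V E \<sigma> i),
     if length (\<sigma> (robber_play g V E \<sigma> i)) \<le> cr E V then robber_region g V E (\<sigma> (robber_play g V E \<sigma> i))
     else {})"
  unfolding robber_play_def by simp

context
  fixes g V E \<sigma>
  assumes dg: "digraph V E" and st: "is_strategy g V E \<sigma>"
begin

lemma robber_play_pos:
  "(\<forall>j<i. length (fst (robber_play g V E \<sigma> j)) \<le> cr E V) \<Longrightarrow>
    is_pos g V E (robber_play g V E \<sigma> i) \<and>
    (length (fst (robber_play g V E \<sigma> i)) \<le> cr E V \<longrightarrow>
      robber_region g V E (fst (robber_play g V E \<sigma> i)) \<subseteq> snd (robber_play g V E \<sigma> i))"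
proof (induction i)
  case 0
  have "finite V" "V \<noteq> {}" using dg unfolding digraph_def by auto
  then have "robber_region g V E [] \<subseteq> V" using robber_region_subset by fastforce
  then show ?case using is_pos_init by simp
next
  case (Suc i)
  then have "is_pos g V E (robber_play g V E \<sigma> i)" "length (fst (robber_play g V E \<sigma> i)) \<le> cr E V"
    "robber_region g V E (fst (robber_play g V E \<sigma> i)) \<subseteq> snd (robber_play g V E \<sigma> i)"
    by auto
  then have "is_succ g V E (robber_play g V E \<sigma> i) (robber_play g V E \<sigma> (Suc i))"
    using robber_reply[OF dg st] by simp
  then have "is_pos g V E (robber_play g V E \<sigma> (Suc i))"
    unfolding is_pos_def using is_succ_gen_pos by blast
  then show ?case by simp
qed

lemma robber_play_succ:
  "(\<forall>j\<le>i. length (fst (robber_play g V E \<sigma> j)) \<le> cr E V) \<Longrightarrow>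
    is_succ g V E (robber_play g V E \<sigma> i) (robber_play g V E \<sigma> (Suc i))"
  using robber_play_pos[of i] robber_reply[OF dg st] by simp

lemma robber_play_search_Some:
  assumes "\<forall>j<N. length (fst (robber_play g V E \<sigma> j)) \<le> cr E V"
    and "cr E V < length (fst (robber_play g V E \<sigma> N))"
  shows "complete_consistent_search g V E \<sigma> (robber_play g V E \<sigma>) (Some N)"
proof -
  obtain m where N: "N = Suc m" using assms(2) by (cases N) auto
  have "\<forall>i\<in>{..N}. is_pos g V E (robber_play g V E \<sigma> i)"
    using robber_play_pos assms(1) by auto
  moreover have "\<forall>i. Suc i \<in> {..N} \<longrightarrow> is_succ g V E (robber_play g V E \<sigma> i) (robber_play g V E \<sigma> (Suc i))"
    using robber_play_succ assms(1) by auto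
  moreover have "snd (robber_play g V E \<sigma> N) = {}" using assms(2) N by simp
  ultimately show ?thesis unfolding complete_consistent_search_def idx_def by auto
qed

lemma robber_play_search_None:
  assumes "\<forall>j. length (fst (robber_play g V E \<sigma> j)) \<le> cr E V"
  shows "complete_consistent_search g V E \<sigma> (robber_play g V E \<sigma>) None"
  using robber_play_pos robber_play_succ assms unfolding complete_consistent_search_def idx_def by auto

end

theorem lifo_lower_bound:
  assumes dg: "digraph V E" and st: "is_strategy g V E \<sigma>" and win: "winning_strat g V E \<sigma>"
    and uses: "uses_at_most g V E \<sigma> k"
  shows "1 + cr E V \<le> k"
proof (rule ccontr)
  assume "\<not> 1 + cr E V \<le> k"
  then have k: "k \<le> cr E V" by simp
  show False
  proof (cases "\<exists>N. cr E V < length (fst (robber_play g V E \<sigma> N))")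
    case True
    define N where "N = (LEAST N. cr E V < length (fst (robber_play g V E \<sigma> N)))"
    have N: "cr E V < length (fst (robber_play g V E \<sigma> N))"
      using LeastI_ex[OF True] N_def by simp
    have "\<forall>j<N. length (fst (robber_play g V E \<sigma> j)) \<le> cr E V"
      using not_less_Least N_def by (metis not_less)
    then have "complete_consistent_search g V E \<sigma> (robber_play g V E \<sigma>) (Some N)"
      using robber_play_search_Some[OF dg st] N by blast
    then have "length (fst (robber_play g V E \<sigma> N)) \<le> k"
      using uses unfolding uses_at_most_def idx_def by auto
    then show False using N k by simp
  next
    case False
    then have bounded: "\<forall>j. length (fst (robber_play g V E \<sigma> j)) \<le> cr E V" by (simp add: not_less)
    obtain i where i: "snd (robber_play g V E \<sigma> i) = {}"
      using win robber_play_search_None[OF dg st bounded] unfolding winning_strat_def idx_def by blast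
    have V: "finite V" "V \<noteq> {}" and noloop: "\<forall>v. (v, v) \<notin> E" using dg unfolding digraph_def by auto
    have "hideout V E (fst (robber_play g V E \<sigma> i)) \<noteq> {}"
      using hideout_cr[OF V noloop] bounded by blast
    moreover have "hideout V E (fst (robber_play g V E \<sigma> i)) \<subseteq> snd (robber_play g V E \<sigma> i)"
      using hideout_subset_robber_region[OF V] robber_play_pos[OF dg st, of i] bounded by blast
    ultimately show False using i by blast
  qed
qed

lemma lifo_eq:
  assumes "digraph V E"
  shows "lifo g V E = 1 + cr E V"
  unfolding lifo_def
  using lifo_strategy_upper_bound[OF assms] lifo_lower_bound[OF assms] by (intro Least_equality) blast+

lemma lifo_m_eq:
  assumes "digraph V E"
  shows "lifo_m g V E = 1 + cr E V"
  unfolding lifo_m_def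
  using lifo_strategy_upper_bound[OF assms] lifo_lower_bound[OF assms] by (intro Least_equality) blast+

lemma sstat_vsc_eq:
  assumes "digraph V E"
  shows "sstat_vsc V E = 1 + cr E V"
  unfolding sstat_vsc_def
  using lifo_strategy_upper_bound[OF assms, of GVSC] lifo_lower_bound[OF assms]
  by (intro Least_equality) blast+

theorem theorem1:
  fixes V :: "'a set" and E :: "('a \<times> 'a) set"
  assumes "digraph V E"
  shows "1 + cr E V = lifo_m GI V E \<and> lifo_m GI V E = lifo GI V E \<and>
         lifo GI V E = lifo_m GISC V E \<and> lifo_m GISC V E = lifo GISC V E \<and>
         lifo GISC V E = lifo_m GV V E \<and> lifo_m GV V E = lifo GV V E \<and>
         lifo GV V E = lifo_m GVSC V E \<and> lifo_m GVSC V E = lifo GVSC V E \<and>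
         lifo GVSC V E = sstat_vsc V E"
  using lifo_eq[OF assms] lifo_m_eq[OF assms] sstat_vsc_eq[OF assms] by simp

end
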